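(* Let $\mathcal L$ be a BQD and let $I\subset T(V\oplus W)$ be the ideal defining its shape algebra, with its $\mathbb N^2$-grading $I=\bigoplus I_{(k,\ell)}$. Then $\dim I_{(3,0)}=\dim I_{(0,3)}=17$ and $\dim I_{(2,1)}=\dim I_{(1,2)}=66$.
   Context: All vector spaces over $\mathbb C$; $TX$ is the tensor algebra; $\alpha\otimes\beta$ is the tensor product of linear maps, $1_X$ the identity; $\mathbb C\otimes X\cong X\cong X\otimes\mathbb C$. A BQD $\mathcal L$ consists of $3$-dimensional vector spaces $V,W$, linear maps $A:V\otimes V\to W$, $a:W\to V\otimes V$, $B:W\otimes W\to V$, $b:V\to W\otimes W$, $C:W\otimes V\to\mathbb C$, $c:\mathbb C\to V\otimes W$, $D:V\otimes W\to\mathbb C$, $d:\mathbb C\to W\otimes V$, and scalars $q,\omega$ with $q\neq0$, $q^2\neq-1$, $\omega^3=1$, such that, with $\kappa=q^{-2}+1+q^2$, $\rho=(q+q^{-1})^{-2}$: $(1_V\otimes C)(c\otimes 1_V)=1_V$; $(D\otimes 1_V)(1_V\otimes d)=1_V$; $Aa=1_W$; $C(A\otimes 1_V)=\omega D(1_V\otimes A)$; $(1_V\otimes a)c=\omega(a\otimes 1_V)d$; $(1_V\otimes D)(a\otimes 1_W)=B$; $\omega^2(1_W\otimes A)(d\otimes 1_V)=b$; $\omega(C\otimes 1_V)(1_W\otimes a)=B$; $(A\otimes 1_W)(1_V\otimes c)=b$; $Dc=\kappa$; $Cd=\kappa$; $(1_V\otimes A)(a\otimes 1_V)(A\otimes 1_V)(1_V\otimes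 a)=\rho(1_{V\otimes W}+cD)$; $(A\otimes 1_V)(1_V\otimes a)(1_V\otimes A)(a\otimes 1_V)=\rho(1_{W\otimes V}+dC)$; and either $q^2=1$ or $q^2$ is not a root of unity. Let $G:=(1_V\otimes A)(a\otimes 1_V):W\otimes V\to V\otimes W$. $I$ is the two-sided ideal of $T(V\oplus W)$ generated by $\operatorname{Im}a$, $\operatorname{Im}b$, $\operatorname{Im}c$ and all $w\otimes v+(q+q^{-1})G(w\otimes v)$ ($v\in V,w\in W$); $T(V\oplus W)$ is $\mathbb N^2$-graded with $V$ in degree $(1,0)$, $W$ in degree $(0,1)$, and $I$ is homogeneous. *)

theory Defs
  imports Complex_Main "HOL-Library.Numeral_Type" "HOL-Library.Function_Algebras"
begin

text \<open>Coordinates: V and W are identified with complex 3-space via fixed bases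
  v_0,v_1,v_2 and w_0,w_1,w_2 (index type 3). Structure maps are given by their
  coefficient tensors:
  A(v_i x v_j) = sum_k A i j k w_k;   a(w_k) = sum_{i,j} a k i j v_i x v_j;
  B(w_i x w_j) = sum_k B i j k v_k;   b(v_k) = sum_{i,j} b k i j w_i x w_j;
  C(w_i x v_j) = C i j;   c(1) = sum_{i,j} c i j v_i x w_j;
  D(v_i x w_j) = D i j;   d(1) = sum_{i,j} d i j w_i x v_j.\<close>

type_synonym idx = "3"
type_synonym t3 = "idx \<Rightarrow> idx \<Rightarrow> idx \<Rightarrow> complex"
type_synonym t2 = "idx \<Rightarrow> idx \<Rightarrow> complex"

definition kdelta :: "idx \<Rightarrow> idx \<Rightarrow> complex" where
  "kdelta i j = (if i = j then 1 else 0)"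

text \<open>G = (1_V x A)(a x 1_V) : W x V -> V x W;  G(w_k x v_m) = sum_{i,l} Gmap a A k m i l v_i x w_l\<close>
definition Gmap :: "t3 \<Rightarrow> t3 \<Rightarrow> idx \<Rightarrow> idx \<Rightarrow> idx \<Rightarrow> idx \<Rightarrow> complex" where
  "Gmap a A k m i l = (\<Sum>j\<in>UNIV. a k i j * A j m l)"

text \<open>H = (A x 1_V)(1_V x a) : V x W -> W x V;  H(v_m x w_k) = sum_{l,j} Hmap a A m k l j w_l x v_j\<close>
definition Hmap :: "t3 \<Rightarrow> t3 \<Rightarrow> idx \<Rightarrow> idx \<Rightarrow> idx \<Rightarrow> idx \<Rightarrow> complex" where
  "Hmap a A m k l j = (\<Sum>i\<in>UNIV. A m i l * a k i j)"

definition BQD :: "complex \<Rightarrow> complex \<Rightarrow> t3 \<Rightarrow> t3 \<Rightarrow> t3 \<Rightarrow> t3 \<Rightarrow> t2 \<Rightarrow> t2 \<Rightarrow> t2 \<Rightarrow> t2 \<Rightarrow> bool" where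
  "BQD q \<omega> A a B b C c D d \<longleftrightarrow>
    (let \<kappa> = inverse (q^2) + 1 + q^2; \<rho> = inverse ((q + inverse q)^2) in
    q \<noteq> 0 \<and> q^2 \<noteq> -1 \<and> \<omega>^3 = 1 \<and>
    \<comment> \<open>(1_V x C)(c x 1_V) = 1_V\<close>
    (\<forall>i m. (\<Sum>j\<in>UNIV. c i j * C j m) = kdelta i m) \<and>
    \<comment> \<open>(D x 1_V)(1_V x d) = 1_V\<close>
    (\<forall>m j. (\<Sum>i\<in>UNIV. D m i * d i j) = kdelta m j) \<and>
    \<comment> \<open>A a = 1_W\<close>
    (\<forall>k l. (\<Sum>i\<in>UNIV. \<Sum>j\<in>UNIV. a k i j * A i j l) = kdelta k l) \<and>
    \<comment> \<open>C(A x 1_V) = omega D(1_V x A)\<close>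
    (\<forall>i j m. (\<Sum>k\<in>UNIV. A i j k * C k m) = \<omega> * (\<Sum>k\<in>UNIV. A j m k * D i k)) \<and>
    \<comment> \<open>(1_V x a)c = omega (a x 1_V)d\<close>
    (\<forall>x y z. (\<Sum>j\<in>UNIV. c x j * a j y z) = \<omega> * (\<Sum>j\<in>UNIV. d j z * a j x y)) \<and>
    \<comment> \<open>(1_V x D)(a x 1_W) = B\<close>
    (\<forall>k l i. B k l i = (\<Sum>j\<in>UNIV. a k i j * D j l)) \<and>
    \<comment> \<open>omega^2 (1_W x A)(d x 1_V) = b\<close>
    (\<forall>m i l. b m i l = \<omega>^2 * (\<Sum>j\<in>UNIV. d i j * A j m l)) \<and>
    \<comment> \<open>omega (C x 1_V)(1_W x a) = B\<close>
    (\<forall>k l j. B k l j = \<omega> * (\<Sum>i\<in>UNIV. C k i * a l i j)) \<and>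
    \<comment> \<open>(A x 1_W)(1_V x c) = b\<close>
    (\<forall>m l j. b m l j = (\<Sum>i\<in>UNIV. c i j * A m i l)) \<and>
    \<comment> \<open>D c = kappa,  C d = kappa\<close>
    (\<Sum>i\<in>UNIV. \<Sum>j\<in>UNIV. c i j * D i j) = \<kappa> \<and>
    (\<Sum>i\<in>UNIV. \<Sum>j\<in>UNIV. d i j * C i j) = \<kappa> \<and>
    \<comment> \<open>G H = rho (1_{V x W} + c D)\<close>
    (\<forall>m k p r. (\<Sum>l\<in>UNIV. \<Sum>j\<in>UNIV. Hmap a A m k l j * Gmap a A l j p r)
        = \<rho> * (kdelta m p * kdelta k r + D m k * c p r)) \<and>
    \<comment> \<open>H G = rho (1_{W x V} + d C)\<close>
    (\<forall>k m x y. (\<Sum>i\<in>UNIV. \<Sum>l\<in>UNIV. Gmap a A k m i l * Hmap a A i l x y)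
        = \<rho> * (kdelta k x * kdelta m y + C k m * d x y)) \<and>
    (q^2 = 1 \<or> \<not> (\<exists>n::nat. n > 0 \<and> (q^2)^n = 1)))"

text \<open>Tensor algebra T(V + W) = free associative algebra on v_0,v_1,v_2,w_0,w_1,w_2:
  finitely supported functions on words in the six letters.\<close>
datatype letter = Vl idx | Wl idx

type_synonym ncpoly = "letter list \<Rightarrow> complex"

definition tensor_alg :: "ncpoly set" where
  "tensor_alg = {p. finite {w. p w \<noteq> 0}}"

definition ncmult :: "ncpoly \<Rightarrow> ncpoly \<Rightarrow> ncpoly" where
  "ncmult p r = (\<lambda>w. \<Sum>n\<in>{..length w}. p (take n w) * r (drop n w))"

definition ncscale :: "complex \<Rightarrow> ncpoly \<Rightarrow> ncpoly" where
  "ncscale s p = (\<lambda>w. s * p w)"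

inductive_set ideal_gen :: "ncpoly set \<Rightarrow> ncpoly set" for S where
  gen: "s \<in> S \<Longrightarrow> s \<in> ideal_gen S"
| zero: "0 \<in> ideal_gen S"
| add: "x \<in> ideal_gen S \<Longrightarrow> y \<in> ideal_gen S \<Longrightarrow> x + y \<in> ideal_gen S"
| scale: "x \<in> ideal_gen S \<Longrightarrow> ncscale s x \<in> ideal_gen S"
| lmult: "x \<in> ideal_gen S \<Longrightarrow> t \<in> tensor_alg \<Longrightarrow> ncmult t x \<in> ideal_gen S"
| rmult: "x \<in> ideal_gen S \<Longrightarrow> t \<in> tensor_alg \<Longrightarrow> ncmult x t \<in> ideal_gen S"

text \<open>Generators: Im a, Im b, Im c, and w x v + (q + q^-1) G(w x v) (for basis vectors,
  which suffices by linearity).\<close>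
definition shape_gens :: "complex \<Rightarrow> t3 \<Rightarrow> t3 \<Rightarrow> t3 \<Rightarrow> t2 \<Rightarrow> ncpoly set" where
  "shape_gens q A a b c =
     {(\<lambda>w. \<Sum>i\<in>UNIV. \<Sum>j\<in>UNIV. if w = [Vl i, Vl j] then a k i j else 0) | k. True}
   \<union> {(\<lambda>w. \<Sum>i\<in>UNIV. \<Sum>j\<in>UNIV. if w = [Wl i, Wl j] then b m i j else 0) | m. True}
   \<union> {(\<lambda>w. \<Sum>i\<in>UNIV. \<Sum>j\<in>UNIV. if w = [Vl i, Wl j] then c i j else 0)}
   \<union> {(\<lambda>w. (if w = [Wl k, Vl m] then 1 else 0)
          + (q + inverse q) * (\<Sum>i\<in>UNIV. \<Sum>l\<in>UNIV. if w = [Vl i, Wl l] then Gmap a A k m i l else 0))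
       | k m. True}"

definition shape_ideal :: "complex \<Rightarrow> t3 \<Rightarrow> t3 \<Rightarrow> t3 \<Rightarrow> t2 \<Rightarrow> ncpoly set" where
  "shape_ideal q A a b c = ideal_gen (shape_gens q A a b c)"

fun isV :: "letter \<Rightarrow> bool" where
  "isV (Vl _) = True" | "isV (Wl _) = False"

definition bideg_part :: "ncpoly set \<Rightarrow> nat \<Rightarrow> nat \<Rightarrow> ncpoly set" where
  "bideg_part J k l = {p \<in> J. \<forall>w. p w \<noteq> 0 \<longrightarrow>
      length (filter isV w) = k \<and> length (filter (\<lambda>x. \<not> isV x) w) = l}"

definition cdim :: "ncpoly set \<Rightarrow> nat" where
  "cdim S = vector_space.dim ncscale S"

end

theory Submission
  imports Defs "HOL-Library.Product_Plus"
begin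

(* Since I is generated by quadratic elements, its part of total degree 3 is spanned by the
   products x g and g x of a letter x with a generator g, so each dimension is the rank of a
   family of such products.

   In bidegree (3,0) these are the 18 products v_i a(w_k) and a(w_k) v_j. The identity
   (1 (x) a) c = omega (a (x) 1) d is one linear dependence among them, and it is the only one:
   contracting a dependence with A on the first two and on the last two tensor factors and using
   G H = rho (1 + c D) with rho <> 1 makes it proportional to that identity. Bidegree (0,3) is the
   same argument for b and B.

   In bidegree (2,1) there are 78 products. The products c v_j and w_j a(w_k) are combinations of
   the other 66, and these are linearly independent: evaluating a dependence on suitable monomials
   kills the coefficients one family at a time, the last family because kappa <> 1. Bidegree (1,2)
   is analogous. *)

section \<open>The tensor algebra\<close>

lemma UNIV_idx: "(UNIV :: idx set) = {0, 1, 2}"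
proof -
  have "x = 0 \<or> x = 1 \<or> x = 2" for x :: idx
  proof (induct x)
    case (of_int z)
    then have "z = 0 \<or> z = 1 \<or> z = 2" by fastforce
    then show ?case by auto
  qed
  then show ?thesis by auto
qed

lemma sum_idx: "sum f (UNIV :: idx set) = f 0 + f 1 + f 2"
  unfolding UNIV_idx by (simp add: ac_simps)

lemma kdelta_commute: "kdelta i j = kdelta j i"
  by (simp add: kdelta_def eq_commute)

lemma sum_kdelta [simp]:
  "(\<Sum>j\<in>UNIV. f j * kdelta j m) = f m" "(\<Sum>j\<in>UNIV. f j * kdelta m j) = f m"
  "(\<Sum>j\<in>UNIV. kdelta j m * f j) = f m" "(\<Sum>j\<in>UNIV. kdelta m j * f j) = f m"
  by (simp_all add: kdelta_def if_distrib[of "times _"] if_distrib[of "\<lambda>x. x * _"] cong: if_cong)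

interpretation nc: vector_space ncscale
  by unfold_locales (auto simp: ncscale_def fun_eq_iff algebra_simps)

text \<open>Not a simp rule: the simplifier would then rewrite the partially applied ncscale in
  nc.span.\<close>

lemma ncscale_apply: "ncscale s p w = s * p w"
  by (simp add: ncscale_def)

lemma sum_fun_apply: "(\<Sum>i\<in>I. (f i :: ncpoly)) w = (\<Sum>i\<in>I. f i w)"
  by (induction I rule: infinite_finite_induct) auto

definition letter_poly :: "letter \<Rightarrow> ncpoly" where
  "letter_poly x = (\<lambda>w. if w = [x] then 1 else 0)"

lemma letter_poly_apply [simp]:
  "letter_poly x [] = 0" "letter_poly x [y] = (if y = x then 1 else 0)" "letter_poly x (y # z # w) = 0"
  by (auto simp: letter_poly_def)

lemma letter_poly_in_tensor_alg: "letter_poly x \<in> tensor_alg"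
proof -
  have "{w. letter_poly x w \<noteq> 0} = {[x]}" by (auto simp: letter_poly_def)
  then show ?thesis by (simp add: tensor_alg_def)
qed

lemma ncmult_Nil: "ncmult t p [] = t [] * p []"
  by (simp add: ncmult_def)

lemma ncmult_length1: "ncmult t p [x] = t [] * p [x] + t [x] * p []"
  by (simp add: ncmult_def atMost_Suc)

lemma ncmult_length2: "ncmult t p [x, y] = t [] * p [x, y] + t [x] * p [y] + t [x, y] * p []"
  by (simp add: ncmult_def atMost_Suc numeral_2_eq_2)

lemma ncmult_length3:
  "ncmult t p [x, y, z] = t [] * p [x, y, z] + t [x] * p [y, z] + t [x, y] * p [z] + t [x, y, z] * p []"
  by (simp add: ncmult_def atMost_Suc numeral_3_eq_3)

lemma ncmult_add_right: "ncmult t (p + r) = ncmult t p + ncmult t r"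
  by (simp add: ncmult_def fun_eq_iff algebra_simps sum.distrib)

lemma ncmult_add_left: "ncmult (p + r) t = ncmult p t + ncmult r t"
  by (simp add: ncmult_def fun_eq_iff algebra_simps sum.distrib)

lemma ncmult_scale_right: "ncmult t (ncscale s p) = ncscale s (ncmult t p)"
  by (simp add: ncmult_def fun_eq_iff algebra_simps sum_distrib_left ncscale_apply)

lemma ncmult_scale_left: "ncmult (ncscale s p) t = ncscale s (ncmult p t)"
  by (simp add: ncmult_def fun_eq_iff algebra_simps sum_distrib_left ncscale_apply)

lemma length_eq_2_iff: "length w = 2 \<longleftrightarrow> (\<exists>x y. w = [x, y])"
  by (auto simp: numeral_2_eq_2 length_Suc_conv)

lemma length_eq_3_iff: "length w = 3 \<longleftrightarrow> (\<exists>x y z. w = [x, y, z])"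
  by (auto simp: numeral_3_eq_3 length_Suc_conv)

lemma length_le_1_iff: "length w \<le> 1 \<longleftrightarrow> w = [] \<or> (\<exists>x. w = [x])"
  by (cases w) auto

definition homogeneous :: "ncpoly \<Rightarrow> nat \<Rightarrow> bool" where
  "homogeneous p n \<longleftrightarrow> (\<forall>w. p w \<noteq> 0 \<longrightarrow> length w = n)"

definition deg_part :: "nat \<Rightarrow> ncpoly \<Rightarrow> ncpoly" where
  "deg_part n p = (\<lambda>w. if length w = n then p w else 0)"

lemma homogeneous_ncmult:
  assumes "homogeneous p m" "homogeneous r n"
  shows "homogeneous (ncmult p r) (m + n)"
  unfolding homogeneous_def
proof (intro allI impI)
  fix w assume "ncmult p r w \<noteq> 0"
  then obtain i where "p (take i w) * r (drop i w) \<noteq> 0"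
    unfolding ncmult_def by (meson sum.neutral)
  then have "length (take i w) = m" "length (drop i w) = n"
    using assms unfolding homogeneous_def by auto
  then show "length w = m + n" by (metis append_take_drop_id length_append)
qed

lemma homogeneous_letter_poly: "homogeneous (letter_poly x) 1"
  by (simp add: homogeneous_def letter_poly_def)

lemma homogeneous_deg_part: "homogeneous (deg_part n p) n"
  by (simp add: homogeneous_def deg_part_def)

lemma homogeneous_eq_zero: "homogeneous p n \<Longrightarrow> length w \<noteq> n \<Longrightarrow> p w = 0"
  by (auto simp: homogeneous_def)

lemma homogeneous_sum: "(\<And>i. i \<in> I \<Longrightarrow> homogeneous (f i) n) \<Longrightarrow> homogeneous (\<Sum>i\<in>I. f i) n"
  unfolding homogeneous_def sum_fun_apply by (metis (mono_tags, lifting) sum.neutral)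

lemma homogeneous_add: "homogeneous p n \<Longrightarrow> homogeneous r n \<Longrightarrow> homogeneous (p + r) n"
  unfolding homogeneous_def by (metis add.right_neutral plus_fun_apply)

lemma homogeneous_ncscale: "homogeneous p n \<Longrightarrow> homogeneous (ncscale s p) n"
  by (auto simp: homogeneous_def ncscale_apply)

lemma homogeneous_eq_3I:
  assumes "\<And>x y z. p [x, y, z] = r [x, y, z]" "homogeneous p 3" "homogeneous r 3"
  shows "p = r"
proof
  fix w :: "letter list"
  show "p w = r w"
    using assms by (cases "length w = 3") (auto simp: length_eq_3_iff homogeneous_eq_zero)
qed

lemma homogeneous_letter_products:
  "homogeneous g 2 \<Longrightarrow> homogeneous (ncmult (letter_poly x) g) 3"
  "homogeneous g 2 \<Longrightarrow> homogeneous (ncmult g (letter_poly x)) 3"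
  using homogeneous_ncmult[OF homogeneous_letter_poly, of g 2 x] homogeneous_ncmult[OF _ homogeneous_letter_poly, of g 2 x]
  by (simp_all add: numeral_3_eq_3)

lemma deg_part_apply:
  "length w = n \<Longrightarrow> deg_part n p w = p w" "length w \<noteq> n \<Longrightarrow> deg_part n p w = 0"
  by (simp_all add: deg_part_def)

lemma deg_part_eq_self: "homogeneous p n \<Longrightarrow> deg_part n p = p"
  by (auto simp: deg_part_def homogeneous_def fun_eq_iff)

lemma deg_part_eq_zero: "homogeneous p n \<Longrightarrow> m \<noteq> n \<Longrightarrow> deg_part m p = 0"
  by (auto simp: deg_part_def homogeneous_def fun_eq_iff)

lemma deg_part_add: "deg_part n (p + r) = deg_part n p + deg_part n r"
  by (auto simp: deg_part_def fun_eq_iff)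

lemma deg_part_ncscale: "deg_part n (ncscale s p) = ncscale s (deg_part n p)"
  by (auto simp: deg_part_def fun_eq_iff ncscale_apply)

lemma deg_part_zero: "deg_part n 0 = 0"
  by (auto simp: deg_part_def fun_eq_iff)

lemma finite_UNIV_letter [simp]: "finite (UNIV :: letter set)"
proof -
  have "(UNIV :: letter set) = range Vl \<union> range Wl" by (auto intro: letter.exhaust)
  then show ?thesis by (metis finite_UnI finite_imageI finite)
qed

lemma ncmult_low_degrees:
  assumes p01: "\<forall>w. length w \<le> 1 \<longrightarrow> p w = 0"
  shows "length w \<le> 1 \<Longrightarrow> ncmult t p w = 0 \<and> ncmult p t w = 0"
    and "deg_part 2 (ncmult t p) = ncscale (t []) (deg_part 2 p)"
    and "deg_part 2 (ncmult p t) = ncscale (t []) (deg_part 2 p)"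
    and "deg_part 3 (ncmult t p) = ncscale (t []) (deg_part 3 p)
           + (\<Sum>y\<in>UNIV. ncscale (t [y]) (ncmult (letter_poly y) (deg_part 2 p)))"
    and "deg_part 3 (ncmult p t) = ncscale (t []) (deg_part 3 p)
           + (\<Sum>y\<in>UNIV. ncscale (t [y]) (ncmult (deg_part 2 p) (letter_poly y)))"
proof -
  show "length w \<le> 1 \<Longrightarrow> ncmult t p w = 0 \<and> ncmult p t w = 0"
    using p01 length_le_1_iff[of w] by (auto simp: ncmult_Nil ncmult_length1)
  show "deg_part 2 (ncmult t p) = ncscale (t []) (deg_part 2 p)"
    "deg_part 2 (ncmult p t) = ncscale (t []) (deg_part 2 p)"
    using p01 by (auto simp: fun_eq_iff deg_part_def length_eq_2_iff ncmult_length2 ncscale_apply)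
  have "homogeneous (ncmult (letter_poly y) (deg_part 2 p)) 3"
    "homogeneous (ncmult (deg_part 2 p) (letter_poly y)) 3" for y
    using homogeneous_ncmult[OF homogeneous_letter_poly homogeneous_deg_part, of y 2 p]
      homogeneous_ncmult[OF homogeneous_deg_part homogeneous_letter_poly, of 2 p y]
    by (simp_all add: numeral_3_eq_3)
  then have off3: "ncmult (letter_poly y) (deg_part 2 p) w = 0"
    "ncmult (deg_part 2 p) (letter_poly y) w = 0" if "length w \<noteq> 3" for y w
    using that homogeneous_eq_zero by blast+
  have "deg_part 3 (ncmult t p) w = (ncscale (t []) (deg_part 3 p)
           + (\<Sum>y\<in>UNIV. ncscale (t [y]) (ncmult (letter_poly y) (deg_part 2 p)))) w
      \<and> deg_part 3 (ncmult p t) w = (ncscale (t []) (deg_part 3 p)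
           + (\<Sum>y\<in>UNIV. ncscale (t [y]) (ncmult (deg_part 2 p) (letter_poly y)))) w" for w
  proof (cases "length w = 3")
    case True
    then obtain x y z where "w = [x, y, z]" by (auto simp: length_eq_3_iff)
    then show ?thesis
      using p01 by (simp add: ncmult_length3 sum_fun_apply mult.commute ncscale_apply deg_part_apply
          if_distrib[of "times _"] if_distrib[of "\<lambda>x. x * _"] cong: if_cong)
  qed (simp add: sum_fun_apply off3 ncscale_apply deg_part_apply)
  then show "deg_part 3 (ncmult t p) = ncscale (t []) (deg_part 3 p)
           + (\<Sum>y\<in>UNIV. ncscale (t [y]) (ncmult (letter_poly y) (deg_part 2 p)))"
    "deg_part 3 (ncmult p t) = ncscale (t []) (deg_part 3 p)
           + (\<Sum>y\<in>UNIV. ncscale (t [y]) (ncmult (deg_part 2 p) (letter_poly y)))"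
    by auto
qed

lemma nc_module_homI:
  assumes "\<And>x y. f (x + y) = f x + f y" "\<And>s x. f (ncscale s x) = ncscale s (f x)"
  shows "module_hom ncscale ncscale f"
  using assms nc.module_axioms by (simp add: module_hom_iff)

lemma nc_span_image:
  assumes "module_hom ncscale ncscale f" "x \<in> nc.span S"
  shows "f x \<in> nc.span (f ` S)"
  using assms module_hom.span_image by blast

definition letter_products :: "ncpoly set \<Rightarrow> ncpoly set" where
  "letter_products S =
     {ncmult (letter_poly x) s | x s. s \<in> S} \<union> {ncmult s (letter_poly x) | x s. s \<in> S}"

lemma letter_product_in_span:
  assumes "p \<in> nc.span S"
  shows "ncmult (letter_poly x) p \<in> nc.span (letter_products S)"
    and "ncmult p (letter_poly x) \<in> nc.span (letter_products S)"
proof -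
  have "module_hom ncscale ncscale (ncmult (letter_poly x))"
    "module_hom ncscale ncscale (\<lambda>p. ncmult p (letter_poly x))"
    by (auto intro!: nc_module_homI simp: ncmult_add_right ncmult_add_left
        ncmult_scale_right ncmult_scale_left)
  then have "ncmult (letter_poly x) p \<in> nc.span ((ncmult (letter_poly x)) ` S)"
    "ncmult p (letter_poly x) \<in> nc.span ((\<lambda>p. ncmult p (letter_poly x)) ` S)"
    using assms by (auto intro: nc_span_image)
  moreover have "(ncmult (letter_poly x)) ` S \<subseteq> letter_products S"
    "(\<lambda>p. ncmult p (letter_poly x)) ` S \<subseteq> letter_products S"
    by (auto simp: letter_products_def)
  ultimately show "ncmult (letter_poly x) p \<in> nc.span (letter_products S)"
    "ncmult p (letter_poly x) \<in> nc.span (letter_products S)"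
    using nc.span_mono by blast+
qed

section \<open>The cubic part of an ideal generated by quadrics\<close>

text \<open>Products in the ideal generated by quadrics are tracked only up to degree 3: there a
  factor t contributes through its constant term and its linear letters, because the other
  factor has no part below degree 2.\<close>

lemma ideal_gen_low_degrees:
  assumes quadratic: "\<And>s. s \<in> S \<Longrightarrow> homogeneous s 2" and p: "p \<in> ideal_gen S"
  shows "(\<forall>w. length w \<le> 1 \<longrightarrow> p w = 0) \<and> deg_part 2 p \<in> nc.span S
    \<and> deg_part 3 p \<in> nc.span (letter_products S)"
  using p
proof (induction p rule: ideal_gen.induct)
  case (gen s)
  with quadratic have "homogeneous s 2" by blast
  then have "deg_part 3 s = 0"
    by (simp add: deg_part_eq_zero)
  then have "deg_part 3 s \<in> nc.span (letter_products S)"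
    using nc.span_zero by metis
  then show ?case
    using gen \<open>homogeneous s 2\<close> by (simp add: deg_part_eq_self homogeneous_eq_zero nc.span_base)
next
  case zero
  show ?case
    using nc.span_zero deg_part_zero by (metis zero_fun_apply zero_fun_def)
next
  case (add x y)
  show ?case
    unfolding deg_part_add by (intro conjI allI impI nc.span_add) (use add.IH in auto)
next
  case (scale x s)
  have "ncscale s x w = 0" if "length w \<le> 1" for w
    using scale.IH that by (simp add: ncscale_apply)
  then show ?case
    using scale.IH unfolding deg_part_ncscale by (blast intro: nc.span_scale)
next
  case (lmult x t)
  then have x01: "\<forall>w. length w \<le> 1 \<longrightarrow> x w = 0" by blast
  show ?case
    unfolding ncmult_low_degrees(2,4)[OF x01] using ncmult_low_degrees(1)[OF x01] lmult.IH
    by (blast intro: nc.span_add nc.span_scale nc.span_sum letter_product_in_span)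
next
  case (rmult x t)
  then have x01: "\<forall>w. length w \<le> 1 \<longrightarrow> x w = 0" by blast
  show ?case
    unfolding ncmult_low_degrees(3,5)[OF x01] using ncmult_low_degrees(1)[OF x01] rmult.IH
    by (blast intro: nc.span_add nc.span_scale nc.span_sum letter_product_in_span)
qed

definition word_bideg :: "letter list \<Rightarrow> nat \<times> nat" where
  "word_bideg w = (length (filter isV w), length (filter (\<lambda>x. \<not> isV x) w))"

lemma word_bideg_append: "word_bideg (u @ v) = word_bideg u + word_bideg v"
  by (simp add: word_bideg_def plus_prod_def)

lemma word_bideg_letter [simp]: "word_bideg [Vl i] = (1, 0)" "word_bideg [Wl i] = (0, 1)"
  by (simp_all add: word_bideg_def)

lemma length_eq_word_bideg: "length w = fst (word_bideg w) + snd (word_bideg w)"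
  by (simp add: word_bideg_def sum_length_filter_compl)

definition bihomogeneous :: "ncpoly \<Rightarrow> nat \<times> nat \<Rightarrow> bool" where
  "bihomogeneous p e \<longleftrightarrow> (\<forall>w. p w \<noteq> 0 \<longrightarrow> word_bideg w = e)"

definition bideg_proj :: "nat \<times> nat \<Rightarrow> ncpoly \<Rightarrow> ncpoly" where
  "bideg_proj e p = (\<lambda>w. if word_bideg w = e then p w else 0)"

lemma bideg_part_eq: "bideg_part J k l = {p \<in> J. bihomogeneous p (k, l)}"
  by (simp add: bideg_part_def bihomogeneous_def word_bideg_def)

lemma bihomogeneous_imp_homogeneous: "bihomogeneous p e \<Longrightarrow> homogeneous p (fst e + snd e)"
  by (auto simp: bihomogeneous_def homogeneous_def length_eq_word_bideg)

lemma bihomogeneous_ncmult: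
  assumes "bihomogeneous p e" "bihomogeneous r e'"
  shows "bihomogeneous (ncmult p r) (e + e')"
  unfolding bihomogeneous_def
proof (intro allI impI)
  fix w assume "ncmult p r w \<noteq> 0"
  then obtain i where "p (take i w) * r (drop i w) \<noteq> 0"
    unfolding ncmult_def by (meson sum.neutral)
  then have "word_bideg (take i w) = e" "word_bideg (drop i w) = e'"
    using assms unfolding bihomogeneous_def by auto
  then show "word_bideg w = e + e'"
    by (metis append_take_drop_id word_bideg_append)
qed

lemma bihomogeneous_letter_poly: "bihomogeneous (letter_poly x) (word_bideg [x])"
  by (simp add: bihomogeneous_def letter_poly_def)

lemma bideg_proj_bihomogeneous:
  "bihomogeneous p e' \<Longrightarrow> bideg_proj e p = (if e' = e then p else 0)"
  by (auto simp: bihomogeneous_def bideg_proj_def fun_eq_iff)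

lemma module_hom_bideg_proj: "module_hom ncscale ncscale (bideg_proj e)"
  by (rule nc_module_homI) (auto simp: bideg_proj_def fun_eq_iff ncscale_apply)

lemma subspace_bideg_part: "nc.subspace (bideg_part (ideal_gen S) k l)"
proof -
  have "bihomogeneous 0 e" for e
    by (simp add: bihomogeneous_def)
  moreover have "bihomogeneous (p + r) e" if "bihomogeneous p e" "bihomogeneous r e" for p r e
    using that unfolding bihomogeneous_def by (metis add.right_neutral plus_fun_apply)
  moreover have "bihomogeneous (ncscale c p) e" if "bihomogeneous p e" for c p e
    using that by (simp add: bihomogeneous_def ncscale_apply)
  ultimately show ?thesis
    unfolding bideg_part_eq nc.subspace_def
    by (auto intro: ideal_gen.zero ideal_gen.add ideal_gen.scale)
qed

theorem span_bideg_part_ideal_gen: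
  assumes quadratic: "\<And>s. s \<in> S \<Longrightarrow> \<exists>e. bihomogeneous s e \<and> fst e + snd e = 2" and "k + l = 3"
  shows "nc.span (bideg_part (ideal_gen S) k l) = nc.span (bideg_proj (k, l) ` letter_products S)"
proof -
  have "p \<in> nc.span (bideg_proj (k, l) ` letter_products S)" if "p \<in> bideg_part (ideal_gen S) k l" for p
  proof -
    from that have p: "p \<in> ideal_gen S" "bihomogeneous p (k, l)" by (auto simp: bideg_part_eq)
    have quadratic_hom: "homogeneous s 2" if "s \<in> S" for s
      using quadratic[OF that] bihomogeneous_imp_homogeneous by fastforce
    have "deg_part 3 p \<in> nc.span (letter_products S)"
      using ideal_gen_low_degrees[OF quadratic_hom p(1)] by blast
    then have "bideg_proj (k, l) (deg_part 3 p) \<in> nc.span (bideg_proj (k, l) ` letter_products S)"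
      by (rule nc_span_image[OF module_hom_bideg_proj])
    moreover have "bideg_proj (k, l) (deg_part 3 p) = p"
      using p(2) \<open>k + l = 3\<close> bihomogeneous_imp_homogeneous[OF p(2)]
      by (simp add: deg_part_eq_self bideg_proj_bihomogeneous)
    ultimately show ?thesis by simp
  qed
  moreover have "bideg_proj (k, l) p \<in> bideg_part (ideal_gen S) k l" if "p \<in> letter_products S" for p
  proof -
    from that obtain x s where s: "s \<in> S"
      and p: "p = ncmult (letter_poly x) s \<or> p = ncmult s (letter_poly x)"
      unfolding letter_products_def by blast
    obtain e where "bihomogeneous s e" using quadratic[OF s] by blast
    then have "\<exists>e. bihomogeneous p e"
      using p bihomogeneous_ncmult bihomogeneous_letter_poly by blast
    moreover have "p \<in> ideal_gen S"
      using p s by (auto intro: ideal_gen.lmult ideal_gen.rmult ideal_gen.gen letter_poly_in_tensor_alg)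
    ultimately show ?thesis
      using nc.subspace_0[OF subspace_bideg_part]
      by (auto simp: bideg_proj_bihomogeneous bideg_part_eq)
  qed
  ultimately show ?thesis
    unfolding nc.span_eq using nc.span_superset by blast
qed

definition bideg_products :: "(nat \<times> nat \<Rightarrow> ncpoly set) \<Rightarrow> nat \<times> nat \<Rightarrow> ncpoly set" where
  "bideg_products S e =
     {ncmult (letter_poly x) s | x s d. s \<in> S d \<and> word_bideg [x] + d = e}
   \<union> {ncmult s (letter_poly x) | x s d. s \<in> S d \<and> d + word_bideg [x] = e}"

lemma bideg_productsI:
  "s \<in> S d \<Longrightarrow> e = word_bideg [x] + d \<Longrightarrow> ncmult (letter_poly x) s \<in> bideg_products S e"
  "s \<in> S d \<Longrightarrow> e = d + word_bideg [x] \<Longrightarrow> ncmult s (letter_poly x) \<in> bideg_products S e"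
  unfolding bideg_products_def by blast+

lemma bideg_productsE:
  assumes "p \<in> bideg_products S (k, l)"
  obtains (V_left) i s where "p = ncmult (letter_poly (Vl i)) s" "s \<in> S (k - 1, l)" "k > 0"
  | (W_left) i s where "p = ncmult (letter_poly (Wl i)) s" "s \<in> S (k, l - 1)" "l > 0"
  | (V_right) i s where "p = ncmult s (letter_poly (Vl i))" "s \<in> S (k - 1, l)" "k > 0"
  | (W_right) i s where "p = ncmult s (letter_poly (Wl i))" "s \<in> S (k, l - 1)" "l > 0"
proof -
  from assms obtain x s d where "s \<in> S d" and
    "p = ncmult (letter_poly x) s \<and> word_bideg [x] + d = (k, l)
       \<or> p = ncmult s (letter_poly x) \<and> d + word_bideg [x] = (k, l)"
    unfolding bideg_products_def by blast
  then show thesis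
    using that by (cases x; cases d) (auto simp: plus_prod_def)
qed

lemma bideg_proj_letter_product:
  assumes "bihomogeneous s d"
  shows "bideg_proj e (ncmult (letter_poly x) s)
      = (if word_bideg [x] + d = e then ncmult (letter_poly x) s else 0)"
    and "bideg_proj e (ncmult s (letter_poly x))
      = (if d + word_bideg [x] = e then ncmult s (letter_poly x) else 0)"
  by (rule bideg_proj_bihomogeneous, rule bihomogeneous_ncmult[OF bihomogeneous_letter_poly assms])
    (rule bideg_proj_bihomogeneous, rule bihomogeneous_ncmult[OF assms bihomogeneous_letter_poly])

lemma bideg_proj_letter_products:
  assumes hom: "\<And>d s. s \<in> S d \<Longrightarrow> bihomogeneous s d"
  shows "bideg_proj e ` letter_products (\<Union>d. S d) \<subseteq> insert 0 (bideg_products S e)"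
    and "bideg_products S e \<subseteq> bideg_proj e ` letter_products (\<Union>d. S d)"
proof -
  show "bideg_proj e ` letter_products (\<Union>d. S d) \<subseteq> insert 0 (bideg_products S e)"
  proof
    fix r assume "r \<in> bideg_proj e ` letter_products (\<Union>d. S d)"
    then obtain x s d where s: "s \<in> S d" and
      "r = bideg_proj e (ncmult (letter_poly x) s) \<or> r = bideg_proj e (ncmult s (letter_poly x))"
      unfolding letter_products_def by blast
    moreover have "ncmult (letter_poly x) s \<in> bideg_products S e" if "word_bideg [x] + d = e"
      using that s unfolding bideg_products_def by blast
    moreover have "ncmult s (letter_poly x) \<in> bideg_products S e" if "d + word_bideg [x] = e"
      using that s unfolding bideg_products_def by blast
    ultimately show "r \<in> insert 0 (bideg_products S e)"
      by (auto simp: bideg_proj_letter_product[OF hom[OF s]])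
  qed
  show "bideg_products S e \<subseteq> bideg_proj e ` letter_products (\<Union>d. S d)"
  proof
    fix p assume "p \<in> bideg_products S e"
    then obtain x s d where "s \<in> S d" and
      "p = ncmult (letter_poly x) s \<and> word_bideg [x] + d = e
        \<or> p = ncmult s (letter_poly x) \<and> d + word_bideg [x] = e"
      unfolding bideg_products_def by blast
    moreover from this have "p \<in> letter_products (\<Union>d. S d)"
      unfolding letter_products_def by blast
    ultimately show "p \<in> bideg_proj e ` letter_products (\<Union>d. S d)"
      using bideg_proj_letter_product[OF hom[OF \<open>s \<in> S d\<close>]] by (metis image_eqI)
  qed
qed

theorem cdim_bideg_part_ideal_gen:
  assumes quadratic: "\<And>d s. s \<in> S d \<Longrightarrow> bihomogeneous s d \<and> fst d + snd d = 2" and "k + l = 3"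
  shows "cdim (bideg_part (ideal_gen (\<Union>d. S d)) k l) = nc.dim (bideg_products S (k, l))"
proof -
  have "\<exists>e. bihomogeneous s e \<and> fst e + snd e = 2" if "s \<in> (\<Union>d. S d)" for s
    using that quadratic by blast
  then have "nc.span (bideg_part (ideal_gen (\<Union>d. S d)) k l)
      = nc.span (bideg_proj (k, l) ` letter_products (\<Union>d. S d))"
    by (rule span_bideg_part_ideal_gen[OF _ \<open>k + l = 3\<close>])
  also have "\<dots> = nc.span (bideg_products S (k, l))"
  proof -
    have "insert 0 (bideg_products S (k, l)) \<subseteq> nc.span (bideg_products S (k, l))"
      using nc.span_zero nc.span_superset by blast
    with bideg_proj_letter_products(1) quadratic
    have "bideg_proj (k, l) ` letter_products (\<Union>d. S d) \<subseteq> nc.span (bideg_products S (k, l))"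
      by (meson order_trans)
    moreover have "bideg_products S (k, l) \<subseteq> nc.span (bideg_proj (k, l) ` letter_products (\<Union>d. S d))"
      using bideg_proj_letter_products(2) quadratic nc.span_superset by (meson order_trans)
    ultimately show ?thesis
      unfolding nc.span_eq by (rule conjI)
  qed
  finally show ?thesis
    unfolding cdim_def by (rule nc.span_eq_dim)
qed

section \<open>Identities of a BQD\<close>

locale bqd =
  fixes q \<omega> :: complex and A a B b :: t3 and C c D d :: t2
  assumes BQD: "BQD q \<omega> A a B b C c D d"
begin

definition "\<kappa> = inverse (q^2) + 1 + q^2"
definition "\<rho> = inverse ((q + inverse q)^2)"
definition "\<tau> = q + inverse q"

abbreviation "G \<equiv> Gmap a A"
abbreviation "H \<equiv> Hmap a A"

lemma
  shows q_nonzero: "q \<noteq> 0"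
    and q_sq_ne_minus_one: "q^2 \<noteq> -1"
    and omega_cube: "\<omega>^3 = 1"
    and c_C_snake: "\<And>i m. (\<Sum>j\<in>UNIV. c i j * C j m) = kdelta i m"
    and D_d_snake: "\<And>m j. (\<Sum>i\<in>UNIV. D m i * d i j) = kdelta m j"
    and A_a_inverse: "\<And>k l. (\<Sum>i\<in>UNIV. \<Sum>j\<in>UNIV. a k i j * A i j l) = kdelta k l"
    and C_A_eq_D_A: "\<And>i j m. (\<Sum>k\<in>UNIV. A i j k * C k m) = \<omega> * (\<Sum>k\<in>UNIV. A j m k * D i k)"
    and c_a_eq_d_a: "\<And>x y z. (\<Sum>j\<in>UNIV. c x j * a j y z) = \<omega> * (\<Sum>j\<in>UNIV. d j z * a j x y)"
    and B_eq_a_D: "\<And>k l i. B k l i = (\<Sum>j\<in>UNIV. a k i j * D j l)"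
    and b_eq_d_A: "\<And>m i l. b m i l = \<omega>^2 * (\<Sum>j\<in>UNIV. d i j * A j m l)"
    and B_eq_C_a: "\<And>k l j. B k l j = \<omega> * (\<Sum>i\<in>UNIV. C k i * a l i j)"
    and b_eq_c_A: "\<And>m l j. b m l j = (\<Sum>i\<in>UNIV. c i j * A m i l)"
    and D_c_trace: "(\<Sum>i\<in>UNIV. \<Sum>j\<in>UNIV. c i j * D i j) = \<kappa>"
    and C_d_trace: "(\<Sum>i\<in>UNIV. \<Sum>j\<in>UNIV. d i j * C i j) = \<kappa>"
    and H_G_eq: "\<And>m k p r. (\<Sum>l\<in>UNIV. \<Sum>j\<in>UNIV. H m k l j * G l j p r)
        = \<rho> * (kdelta m p * kdelta k r + D m k * c p r)"
    and G_H_eq: "\<And>k m x y. (\<Sum>i\<in>UNIV. \<Sum>l\<in>UNIV. G k m i l * H i l x y)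
        = \<rho> * (kdelta k x * kdelta m y + C k m * d x y)"
    and q_sq_not_root_of_unity: "q^2 = 1 \<or> \<not> (\<exists>n::nat. n > 0 \<and> (q^2)^n = 1)"
  using BQD unfolding BQD_def Let_def \<kappa>_def \<rho>_def by auto

lemma omega_nonzero: "\<omega> \<noteq> 0"
  using omega_cube by auto

lemma omega_mult_omega_sq: "\<omega> * \<omega>^2 = 1"
  using omega_cube by (simp add: power2_eq_square power3_eq_cube mult.assoc)

lemma q_sq_eq_one_if_root_of_unity: "(q^2)^n = 1 \<Longrightarrow> n > 0 \<Longrightarrow> q^2 = 1"
  using q_sq_not_root_of_unity by blast

lemma q_sq_mult_kappa: "q^2 * \<kappa> = (q^2)^2 + q^2 + 1"
  using q_nonzero by (simp add: \<kappa>_def field_simps power2_eq_square)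

lemma kappa_nonzero: "\<kappa> \<noteq> 0"
proof
  assume "\<kappa> = 0"
  then have x: "(q^2)^2 + q^2 + 1 = 0" using q_sq_mult_kappa by simp
  have "(q^2)^3 - 1 = (q^2 - 1) * ((q^2)^2 + q^2 + 1)"
    by (simp add: algebra_simps power2_eq_square power3_eq_cube)
  then have "q^2 = 1" using x by (intro q_sq_eq_one_if_root_of_unity[of 3]) simp_all
  with x show False by simp
qed

lemma kappa_ne_one: "\<kappa> \<noteq> 1"
proof
  assume "\<kappa> = 1"
  then have x: "(q^2)^2 + 1 = 0" using q_sq_mult_kappa by (simp add: algebra_simps)
  have "(q^2)^4 - 1 = ((q^2)^2 - 1) * ((q^2)^2 + 1)"
    by (simp add: algebra_simps power2_eq_square power4_eq_xxxx)
  then have "q^2 = 1" using x by (intro q_sq_eq_one_if_root_of_unity[of 4]) simp_all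
  with x show False by simp
qed

lemma tau_sq: "\<tau>^2 = \<kappa> + 1"
  using q_nonzero by (simp add: \<tau>_def \<kappa>_def power2_eq_square field_simps)

lemma tau_nonzero: "\<tau> \<noteq> 0"
proof
  assume "\<tau> = 0"
  then have "q^2 * (\<kappa> + 1) = 0" using tau_sq by simp
  moreover have "q^2 * (\<kappa> + 1) = (q^2 + 1)^2"
    using q_sq_mult_kappa by (simp add: algebra_simps power2_eq_square)
  ultimately have "q^2 = -1" by (simp add: add_eq_0_iff2)
  with q_sq_ne_minus_one show False ..
qed

lemma rho_mult_tau_sq: "\<rho> * \<tau>^2 = 1"
  using tau_nonzero by (simp add: \<rho>_def \<tau>_def[symmetric])

lemma rho_ne_one: "\<rho> \<noteq> 1"
  using rho_mult_tau_sq tau_sq kappa_nonzero by auto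

lemma d_a_eq_c_a: "(\<Sum>k\<in>UNIV. d k z * a k x y) = inverse \<omega> * (\<Sum>k\<in>UNIV. c x k * a k y z)"
  using c_a_eq_d_a[of x y z] omega_nonzero by (simp add: field_simps)

lemma A_D_eq_A_C: "(\<Sum>l\<in>UNIV. A j m l * D i l) = inverse \<omega> * (\<Sum>l\<in>UNIV. A i j l * C l m)"
  using C_A_eq_D_A[of i j m] omega_nonzero by (simp add: field_simps)

lemma d_A_eq_b: "(\<Sum>t\<in>UNIV. d y t * A t j l) = inverse (\<omega>^2) * b j y l"
  using b_eq_d_A[of j y l] omega_nonzero by (simp add: field_simps)

lemma b_B_inverse: "(\<Sum>k\<in>UNIV. \<Sum>l\<in>UNIV. b m k l * B k l i) = kdelta m i"
proof -
  have "(\<Sum>k\<in>UNIV. \<Sum>l\<in>UNIV. b m k l * B k l i)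
     = (\<Sum>k\<in>UNIV. \<Sum>l\<in>UNIV. (\<omega>^2 * (\<Sum>j\<in>UNIV. d k j * A j m l)) * (\<Sum>j'\<in>UNIV. a k i j' * D j' l))"
    by (simp add: B_eq_a_D b_eq_d_A)
  also have "\<dots> = \<omega>^2 * (\<Sum>j\<in>UNIV. \<Sum>j'\<in>UNIV. (\<Sum>k\<in>UNIV. d k j * a k i j') * (\<Sum>l\<in>UNIV. A j m l * D j' l))"
    by (simp only: sum_idx) (simp add: algebra_simps)
  also have "\<dots> = \<omega>^2 * (\<Sum>j\<in>UNIV. \<Sum>j'\<in>UNIV. (inverse \<omega> * (\<Sum>k\<in>UNIV. c i k * a k j' j)) * (inverse \<omega> * (\<Sum>l\<in>UNIV. A j' j l * C l m)))"
    by (simp only: d_a_eq_c_a A_D_eq_A_C)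
  also have "\<dots> = (\<omega>^2 * inverse \<omega> * inverse \<omega>) * (\<Sum>k\<in>UNIV. \<Sum>l\<in>UNIV. c i k * (\<Sum>j'\<in>UNIV. \<Sum>j\<in>UNIV. a k j' j * A j' j l) * C l m)"
    by (simp only: sum_idx) (simp add: algebra_simps)
  also have "\<omega>^2 * inverse \<omega> * inverse \<omega> = 1"
    using omega_nonzero by (simp add: power2_eq_square field_simps)
  also have "(\<Sum>k\<in>UNIV. \<Sum>l\<in>UNIV. c i k * (\<Sum>j'\<in>UNIV. \<Sum>j\<in>UNIV. a k j' j * A j' j l) * C l m)
      = (\<Sum>k\<in>UNIV. \<Sum>l\<in>UNIV. c i k * kdelta k l * C l m)"
    by (simp only: A_a_inverse)
  also have "\<dots> = kdelta i m"
    by (simp add: c_C_snake mult.assoc sum_distrib_left[symmetric])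
  finally show ?thesis by (simp add: kdelta_commute)
qed

lemma c_G_eq_b_a: "(\<Sum>y\<in>UNIV. c x y * G y j i l) = inverse \<omega> * (\<Sum>k\<in>UNIV. b j k l * a k x i)"
proof -
  have "(\<Sum>y\<in>UNIV. c x y * G y j i l) = (\<Sum>t\<in>UNIV. (\<Sum>y\<in>UNIV. c x y * a y i t) * A t j l)"
    unfolding Gmap_def by (simp only: sum_idx) (simp add: algebra_simps)
  also have "\<dots> = (\<Sum>t\<in>UNIV. (\<omega> * (\<Sum>y\<in>UNIV. d y t * a y x i)) * A t j l)"
    by (simp only: c_a_eq_d_a)
  also have "\<dots> = \<omega> * (\<Sum>y\<in>UNIV. a y x i * (\<Sum>t\<in>UNIV. d y t * A t j l))"
    by (simp only: sum_idx) (simp add: algebra_simps)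
  also have "\<dots> = \<omega> * (\<Sum>y\<in>UNIV. a y x i * (inverse (\<omega>^2) * b j y l))"
    by (simp only: d_A_eq_b)
  also have "\<dots> = (\<omega> * inverse (\<omega>^2)) * (\<Sum>y\<in>UNIV. b j y l * a y x i)"
    by (simp only: sum_idx) (simp add: algebra_simps)
  also have "\<omega> * inverse (\<omega>^2) = inverse \<omega>"
    using omega_nonzero by (simp add: power2_eq_square field_simps)
  finally show ?thesis .
qed

lemma a_G_eq_a_H: "(\<Sum>x\<in>UNIV. a k x y * G j x i l) = (\<Sum>t\<in>UNIV. a j i t * H t k l y)"
  unfolding Gmap_def Hmap_def by (simp only: sum_idx) (simp add: algebra_simps)

lemma a_G_G_eq: "(\<Sum>x\<in>UNIV. \<Sum>y\<in>UNIV. \<Sum>l\<in>UNIV. a k x y * G j x i l * G l y i' l')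
   = \<rho> * (a j i i' * kdelta k l' + B j k i * c i' l')"
proof -
  have "(\<Sum>x\<in>UNIV. \<Sum>y\<in>UNIV. \<Sum>l\<in>UNIV. a k x y * G j x i l * G l y i' l')
     = (\<Sum>y\<in>UNIV. \<Sum>l\<in>UNIV. (\<Sum>x\<in>UNIV. a k x y * G j x i l) * G l y i' l')"
    by (simp only: sum_idx) (simp add: algebra_simps)
  also have "\<dots> = (\<Sum>y\<in>UNIV. \<Sum>l\<in>UNIV. (\<Sum>t\<in>UNIV. a j i t * H t k l y) * G l y i' l')"
    by (simp only: a_G_eq_a_H)
  also have "\<dots> = (\<Sum>t\<in>UNIV. a j i t * (\<Sum>l\<in>UNIV. \<Sum>y\<in>UNIV. H t k l y * G l y i' l'))"
    by (simp only: sum_idx) (simp add: algebra_simps)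
  also have "\<dots> = (\<Sum>t\<in>UNIV. a j i t * (\<rho> * (kdelta t i' * kdelta k l' + D t k * c i' l')))"
    by (simp only: H_G_eq)
  also have "\<dots> = \<rho> * ((\<Sum>t\<in>UNIV. a j i t * kdelta t i') * kdelta k l' + (\<Sum>t\<in>UNIV. a j i t * D t k) * c i' l')"
    by (simp only: sum_idx) (simp add: algebra_simps)
  also have "\<dots> = \<rho> * (a j i i' * kdelta k l' + B j k i * c i' l')"
    by (simp add: B_eq_a_D)
  finally show ?thesis .
qed

lemma c_B_eq_a: "(\<Sum>y\<in>UNIV. c i y * B y z p) = \<omega> * a z i p"
proof -
  have "(\<Sum>y\<in>UNIV. c i y * B y z p) = (\<Sum>y\<in>UNIV. c i y * (\<omega> * (\<Sum>t\<in>UNIV. C y t * a z t p)))"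
    by (simp only: B_eq_C_a)
  also have "\<dots> = \<omega> * (\<Sum>t\<in>UNIV. (\<Sum>y\<in>UNIV. c i y * C y t) * a z t p)"
    by (simp only: sum_idx) (simp add: algebra_simps)
  also have "\<dots> = \<omega> * a z i p"
    by (simp add: c_C_snake)
  finally show ?thesis .
qed

lemma c_G_eq_a_b: "(\<Sum>x\<in>UNIV. c x y * G j x i l) = (\<Sum>t\<in>UNIV. a j i t * b t l y)"
  unfolding Gmap_def b_eq_c_A by (simp only: sum_idx) (simp add: algebra_simps)

lemma b_G_eq_H_b: "(\<Sum>y\<in>UNIV. b m x y * G y j i l) = inverse \<omega> * (\<Sum>y\<in>UNIV. H m y x i * b j y l)"
proof -
  have "(\<Sum>y\<in>UNIV. b m x y * G y j i l)
      = (\<Sum>u\<in>UNIV. \<Sum>s\<in>UNIV. A m u x * A s j l * (\<Sum>y\<in>UNIV. c u y * a y i s))"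
    unfolding Gmap_def b_eq_c_A[of m x] by (simp only: sum_idx) (simp add: algebra_simps)
  also have "\<dots> = (\<Sum>u\<in>UNIV. \<Sum>s\<in>UNIV. A m u x * A s j l * (\<omega> * (\<Sum>y\<in>UNIV. d y s * a y u i)))"
    by (simp only: c_a_eq_d_a)
  also have "\<dots> = \<omega> * (\<Sum>y\<in>UNIV. (\<Sum>u\<in>UNIV. A m u x * a y u i) * (\<Sum>s\<in>UNIV. d y s * A s j l))"
    by (simp only: sum_idx) (simp add: algebra_simps)
  also have "\<dots> = \<omega> * (\<Sum>y\<in>UNIV. H m y x i * (inverse (\<omega>^2) * b j y l))"
    by (simp only: d_A_eq_b Hmap_def)
  also have "\<dots> = (\<omega> * inverse (\<omega>^2)) * (\<Sum>y\<in>UNIV. H m y x i * b j y l)"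
    by (simp only: sum_idx) (simp add: algebra_simps)
  also have "\<omega> * inverse (\<omega>^2) = inverse \<omega>"
    using omega_nonzero by (simp add: power2_eq_square field_simps)
  finally show ?thesis .
qed

lemma b_G_G_eq: "(\<Sum>x\<in>UNIV. \<Sum>i\<in>UNIV. \<Sum>y\<in>UNIV. b m x y * G y j i l * G x i i' l')
  = inverse \<omega> * \<rho> * (kdelta i' m * b j l' l + c i' l' * (\<Sum>t\<in>UNIV. D m t * b j t l))"
proof -
  have "(\<Sum>x\<in>UNIV. \<Sum>i\<in>UNIV. \<Sum>y\<in>UNIV. b m x y * G y j i l * G x i i' l')
     = (\<Sum>x\<in>UNIV. \<Sum>i\<in>UNIV. (\<Sum>y\<in>UNIV. b m x y * G y j i l) * G x i i' l')"
    by (simp only: sum_idx) (simp add: algebra_simps)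
  also have "\<dots> = (\<Sum>x\<in>UNIV. \<Sum>i\<in>UNIV. (inverse \<omega> * (\<Sum>y\<in>UNIV. H m y x i * b j y l)) * G x i i' l')"
    by (simp only: b_G_eq_H_b)
  also have "\<dots> = inverse \<omega> * (\<Sum>y\<in>UNIV. b j y l * (\<Sum>x\<in>UNIV. \<Sum>i\<in>UNIV. H m y x i * G x i i' l'))"
    by (simp only: sum_idx) (simp add: algebra_simps)
  also have "\<dots> = inverse \<omega> * (\<Sum>y\<in>UNIV. b j y l * (\<rho> * (kdelta m i' * kdelta y l' + D m y * c i' l')))"
    by (simp only: H_G_eq)
  also have "\<dots> = inverse \<omega> * \<rho> * (kdelta m i' * (\<Sum>y\<in>UNIV. b j y l * kdelta y l') + c i' l' * (\<Sum>t\<in>UNIV. D m t * b j t l))"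
    by (simp only: sum_idx) (simp add: algebra_simps)
  also have "\<dots> = inverse \<omega> * \<rho> * (kdelta i' m * b j l' l + c i' l' * (\<Sum>t\<in>UNIV. D m t * b j t l))"
    by (simp add: kdelta_commute)
  finally show ?thesis .
qed

lemma Gmap_b_B: "Gmap b B k z x m = \<omega> * H k z x m"
proof -
  have "Gmap b B k z x m = (\<Sum>y\<in>UNIV. b k x y * B y z m)"
    by (simp add: Gmap_def)
  also have "\<dots> = \<omega> * (\<Sum>u\<in>UNIV. \<Sum>i\<in>UNIV. A k u x * a z i m * (\<Sum>y\<in>UNIV. c u y * C y i))"
    unfolding b_eq_c_A[of k x] B_eq_C_a[of _ z m] by (simp only: sum_idx) (simp add: algebra_simps)
  also have "\<dots> = \<omega> * (\<Sum>u\<in>UNIV. A k u x * a z u m)"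
    by (simp add: c_C_snake sum_distrib_left[symmetric] mult.assoc)
  finally show ?thesis by (simp add: Hmap_def)
qed

lemma Hmap_b_B: "Hmap b B x k m z = \<omega>^2 * G x k m z"
proof -
  have "Hmap b B x k m z = (\<Sum>y\<in>UNIV. b k y z * B x y m)"
    by (simp add: Hmap_def mult.commute)
  also have "\<dots> = \<omega>^2 * (\<Sum>j\<in>UNIV. \<Sum>s\<in>UNIV. a x m j * A s k z * (\<Sum>y\<in>UNIV. D j y * d y s))"
    unfolding b_eq_d_A[of k _ z] B_eq_a_D[of x _ m] by (simp only: sum_idx) (simp add: algebra_simps)
  also have "\<dots> = \<omega>^2 * (\<Sum>j\<in>UNIV. a x m j * A j k z)"
    by (simp add: D_d_snake sum_distrib_left[symmetric] mult.assoc)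
  finally show ?thesis by (simp add: Gmap_def)
qed

lemma G_H_eq_for_b_B:
  "(\<Sum>x\<in>UNIV. \<Sum>k\<in>UNIV. Gmap b B k' z' x k * Hmap b B x k m z)
    = \<rho> * (kdelta k' m * kdelta z' z + D k' z' * c m z)"
proof -
  have "Gmap b B k' z' x k * Hmap b B x k m z = (\<omega> * \<omega>^2) * (H k' z' x k * G x k m z)" for x k
    by (simp add: Gmap_b_B Hmap_b_B mult_ac)
  then have "(\<Sum>x\<in>UNIV. \<Sum>k\<in>UNIV. Gmap b B k' z' x k * Hmap b B x k m z)
      = (\<omega> * \<omega>^2) * (\<Sum>x\<in>UNIV. \<Sum>k\<in>UNIV. H k' z' x k * G x k m z)"
    by (simp add: sum_distrib_left)
  then show ?thesis
    using omega_mult_omega_sq H_G_eq by simp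
qed

lemma c_b_eq_d_b: "(\<Sum>k\<in>UNIV. c k z * b k x y) = \<omega>^2 * (\<Sum>k\<in>UNIV. d x k * b k y z)"
proof -
  have "(\<Sum>k\<in>UNIV. c k z * b k x y) = \<omega>^2 * (\<Sum>j\<in>UNIV. d x j * (\<Sum>k\<in>UNIV. c k z * A j k y))"
    unfolding b_eq_d_A[of _ x y] by (simp only: sum_idx) (simp add: algebra_simps)
  also have "\<dots> = \<omega>^2 * (\<Sum>k\<in>UNIV. d x k * b k y z)"
    by (simp only: b_eq_c_A)
  finally show ?thesis .
qed

lemma a_b_D_eq: "(\<Sum>i\<in>UNIV. \<Sum>m\<in>UNIV. \<Sum>y\<in>UNIV. a z' i m * b m y z * D i y) = \<omega>^2 * kdelta z' z"
proof -
  have "(\<Sum>i\<in>UNIV. \<Sum>m\<in>UNIV. \<Sum>y\<in>UNIV. a z' i m * b m y z * D i y)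
     = \<omega>^2 * (\<Sum>i\<in>UNIV. \<Sum>m\<in>UNIV. \<Sum>s\<in>UNIV. a z' i m * A s m z * (\<Sum>y\<in>UNIV. D i y * d y s))"
    unfolding b_eq_d_A[of _ _ z] by (simp only: sum_idx) (simp add: algebra_simps)
  also have "\<dots> = \<omega>^2 * (\<Sum>i\<in>UNIV. \<Sum>m\<in>UNIV. a z' i m * A i m z)"
    by (simp add: D_d_snake sum_distrib_left[symmetric] mult.assoc)
  also have "\<dots> = \<omega>^2 * kdelta z' z" by (simp only: A_a_inverse)
  finally show ?thesis .
qed

text \<open>Contracting a relation on its first two factors (with A, resp. B) expresses \<gamma> through
  \<delta>; contracting on the last two with D and substituting leaves (\<kappa> - 1) \<delta> = 0.\<close>

lemma independent_a_W_and_V_c: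
  assumes rel: "\<And>x y z. (\<Sum>k\<in>UNIV. \<gamma> k z * a k x y) + \<delta> x * c y z = 0"
  shows "\<gamma> = (\<lambda>_ _. 0) \<and> \<delta> = (\<lambda>_. 0)"
proof -
  have contract_first: "\<gamma> m z + (\<Sum>x\<in>UNIV. \<delta> x * b x m z) = 0" for m z
  proof -
    have "0 = (\<Sum>x\<in>UNIV. \<Sum>y\<in>UNIV. ((\<Sum>k\<in>UNIV. \<gamma> k z * a k x y) + \<delta> x * c y z) * A x y m)"
      by (simp add: rel)
    also have "\<dots> = (\<Sum>k\<in>UNIV. \<gamma> k z * (\<Sum>x\<in>UNIV. \<Sum>y\<in>UNIV. a k x y * A x y m)) + (\<Sum>x\<in>UNIV. \<delta> x * (\<Sum>y\<in>UNIV. c y z * A x y m))"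
      by (simp only: sum_idx) (simp add: algebra_simps)
    also have "\<dots> = \<gamma> m z + (\<Sum>x\<in>UNIV. \<delta> x * b x m z)"
      by (simp add: A_a_inverse b_eq_c_A)
    finally show ?thesis by simp
  qed
  have contract_last: "(\<Sum>k\<in>UNIV. \<Sum>z\<in>UNIV. \<gamma> k z * B k z x) + \<kappa> * \<delta> x = 0" for x
  proof -
    have "0 = (\<Sum>y\<in>UNIV. \<Sum>z\<in>UNIV. ((\<Sum>k\<in>UNIV. \<gamma> k z * a k x y) + \<delta> x * c y z) * D y z)"
      by (simp add: rel)
    also have "\<dots> = (\<Sum>k\<in>UNIV. \<Sum>z\<in>UNIV. \<gamma> k z * (\<Sum>y\<in>UNIV. a k x y * D y z)) + \<delta> x * (\<Sum>y\<in>UNIV. \<Sum>z\<in>UNIV. c y z * D y z)"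
      by (simp only: sum_idx) (simp add: algebra_simps)
    also have "\<dots> = (\<Sum>k\<in>UNIV. \<Sum>z\<in>UNIV. \<gamma> k z * B k z x) + \<kappa> * \<delta> x"
      by (simp add: B_eq_a_D D_c_trace)
    finally show ?thesis by simp
  qed
  have \<gamma>_eq: "\<gamma> k z = - (\<Sum>x\<in>UNIV. \<delta> x * b x k z)" for k z
    using contract_first[of k z] by (simp add: eq_neg_iff_add_eq_0)
  have substituted: "(\<Sum>k\<in>UNIV. \<Sum>z\<in>UNIV. \<gamma> k z * B k z x) = - \<delta> x" for x
  proof -
    have "(\<Sum>k\<in>UNIV. \<Sum>z\<in>UNIV. \<gamma> k z * B k z x) = (\<Sum>k\<in>UNIV. \<Sum>z\<in>UNIV. (- (\<Sum>x'\<in>UNIV. \<delta> x' * b x' k z)) * B k z x)"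
      by (simp only: \<gamma>_eq)
    also have "\<dots> = - (\<Sum>x'\<in>UNIV. \<delta> x' * (\<Sum>k\<in>UNIV. \<Sum>z\<in>UNIV. b x' k z * B k z x))"
      by (simp only: sum_idx) (simp add: algebra_simps)
    also have "\<dots> = - \<delta> x" by (simp add: b_B_inverse)
    finally show ?thesis .
  qed
  have "(\<kappa> - 1) * \<delta> x = 0" for x using contract_last[of x] substituted[of x] by (simp add: algebra_simps)
  then have \<delta>_zero: "\<delta> x = 0" for x using kappa_ne_one by simp
  then have "\<gamma> k z = 0" for k z using \<gamma>_eq by simp
  then show ?thesis using \<delta>_zero by (simp add: fun_eq_iff)
qed

lemma independent_V_b_and_c_W:
  assumes rel: "\<And>i y z. (\<Sum>m\<in>UNIV. \<gamma> i m * b m y z) + \<delta> z * c i y = 0"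
  shows "\<gamma> = (\<lambda>_ _. 0) \<and> \<delta> = (\<lambda>_. 0)"
proof -
  have contract_first: "\<gamma> i p + \<omega> * (\<Sum>z\<in>UNIV. \<delta> z * a z i p) = 0" for i p
  proof -
    have "0 = (\<Sum>y\<in>UNIV. \<Sum>z\<in>UNIV. ((\<Sum>m\<in>UNIV. \<gamma> i m * b m y z) + \<delta> z * c i y) * B y z p)"
      by (simp add: rel)
    also have "\<dots> = (\<Sum>m\<in>UNIV. \<gamma> i m * (\<Sum>y\<in>UNIV. \<Sum>z\<in>UNIV. b m y z * B y z p)) + (\<Sum>z\<in>UNIV. \<delta> z * (\<Sum>y\<in>UNIV. c i y * B y z p))"
      by (simp only: sum_idx) (simp add: algebra_simps)
    also have "\<dots> = \<gamma> i p + (\<Sum>z\<in>UNIV. \<delta> z * (\<omega> * a z i p))"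
      by (simp add: b_B_inverse c_B_eq_a)
    also have "\<dots> = \<gamma> i p + \<omega> * (\<Sum>z\<in>UNIV. \<delta> z * a z i p)"
      by (simp add: sum_distrib_left mult_ac)
    finally show ?thesis by simp
  qed
  have contract_last: "(\<Sum>i\<in>UNIV. \<Sum>y\<in>UNIV. \<Sum>m\<in>UNIV. \<gamma> i m * b m y z * D i y) + \<kappa> * \<delta> z = 0" for z
  proof -
    have "0 = (\<Sum>i\<in>UNIV. \<Sum>y\<in>UNIV. ((\<Sum>m\<in>UNIV. \<gamma> i m * b m y z) + \<delta> z * c i y) * D i y)"
      by (simp add: rel)
    also have "\<dots> = (\<Sum>i\<in>UNIV. \<Sum>y\<in>UNIV. \<Sum>m\<in>UNIV. \<gamma> i m * b m y z * D i y) + \<delta> z * (\<Sum>i\<in>UNIV. \<Sum>y\<in>UNIV. c i y * D i y)"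
      by (simp only: sum_idx) (simp add: algebra_simps)
    also have "\<dots> = (\<Sum>i\<in>UNIV. \<Sum>y\<in>UNIV. \<Sum>m\<in>UNIV. \<gamma> i m * b m y z * D i y) + \<kappa> * \<delta> z"
      by (simp add: D_c_trace)
    finally show ?thesis by simp
  qed
  have \<gamma>_eq: "\<gamma> i m = - (\<omega> * (\<Sum>z\<in>UNIV. \<delta> z * a z i m))" for i m
    using contract_first[of i m] by (simp add: eq_neg_iff_add_eq_0)
  have substituted: "(\<Sum>i\<in>UNIV. \<Sum>y\<in>UNIV. \<Sum>m\<in>UNIV. \<gamma> i m * b m y z * D i y) = - \<delta> z" for z
  proof -
    have "(\<Sum>i\<in>UNIV. \<Sum>y\<in>UNIV. \<Sum>m\<in>UNIV. \<gamma> i m * b m y z * D i y)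
       = (\<Sum>i\<in>UNIV. \<Sum>y\<in>UNIV. \<Sum>m\<in>UNIV. (- (\<omega> * (\<Sum>z'\<in>UNIV. \<delta> z' * a z' i m))) * b m y z * D i y)"
      by (simp only: \<gamma>_eq)
    also have "\<dots> = - \<omega> * (\<Sum>z'\<in>UNIV. \<delta> z' * (\<Sum>i\<in>UNIV. \<Sum>m\<in>UNIV. \<Sum>y\<in>UNIV. a z' i m * b m y z * D i y))"
      by (simp only: sum_idx) (simp add: algebra_simps)
    also have "\<dots> = - \<omega> * (\<Sum>z'\<in>UNIV. (\<delta> z' * \<omega>^2) * kdelta z' z)" by (simp only: a_b_D_eq) (simp only: mult.assoc)
    also have "\<dots> = - (\<omega> * \<omega>^2) * \<delta> z" by (simp add: mult.assoc[symmetric])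
    also have "\<dots> = - \<delta> z" using omega_mult_omega_sq by simp
    finally show ?thesis .
  qed
  have "(\<kappa> - 1) * \<delta> x = 0" for x using contract_last[of x] substituted[of x] by (simp add: algebra_simps)
  then have \<delta>_zero: "\<delta> x = 0" for x using kappa_ne_one by simp
  then have "\<gamma> k z = 0" for k z using \<gamma>_eq by simp
  then show ?thesis using \<delta>_zero by (simp add: fun_eq_iff)
qed

end

section \<open>The generators of the shape algebra\<close>

lemma if_zero_simps:
  "(x::complex) * (if P then y else 0) = (if P then x * y else 0)"
  "(if P then y else 0) * (x::complex) = (if P then y * x else 0)"
  "- (if P then y else 0) = (if P then - y else (0::complex))"
  "(if P \<and> Q then y else (0::complex)) = (if P then if Q then y else 0 else 0)"
  "(\<Sum>j\<in>J. if P then f j else 0) = (if P then (\<Sum>j\<in>J. f j) else (0::complex))"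
  by simp_all

text \<open>The generators of I are quad_gen Vl Vl (a k) = a(w_k),
  quad_gen Wl Wl (b m) = b(v_m), quad_gen Vl Wl c = c(1) and
  exchange_gen q A a k m = w_k (x) v_m + (q + 1/q) G(w_k (x) v_m).\<close>

definition quad_gen :: "(idx \<Rightarrow> letter) \<Rightarrow> (idx \<Rightarrow> letter) \<Rightarrow> t2 \<Rightarrow> ncpoly" where
  "quad_gen L R e = (\<lambda>w. \<Sum>i\<in>UNIV. \<Sum>j\<in>UNIV. if w = [L i, R j] then e i j else 0)"

definition exchange_gen :: "complex \<Rightarrow> t3 \<Rightarrow> t3 \<Rightarrow> idx \<Rightarrow> idx \<Rightarrow> ncpoly" where
  "exchange_gen q A a k m =
     (\<lambda>w. (if w = [Wl k, Vl m] then 1 else 0) + (q + inverse q) * quad_gen Vl Wl (Gmap a A k m) w)"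

lemma inj_letters [simp]: "inj Vl" "inj Wl"
  by (simp_all add: inj_def)

lemma quad_gen_length2:
  "inj L \<Longrightarrow> inj R \<Longrightarrow>
    quad_gen L R e [x, y] = (if x \<in> range L \<and> y \<in> range R then e (inv L x) (inv R y) else 0)"
  by (auto simp: quad_gen_def inj_eq if_zero_simps intro!: sum.neutral)

lemma quad_gen_other_length [simp]:
  "quad_gen L R e [] = 0" "quad_gen L R e [x] = 0" "quad_gen L R e (x # y # z # w) = 0"
  by (simp_all add: quad_gen_def)

lemma exchange_gen_apply [simp]:
  "exchange_gen q A a k m [x, y] =
     (if x = Wl k \<and> y = Vl m then 1 else 0) + (q + inverse q) * quad_gen Vl Wl (Gmap a A k m) [x, y]"
  "exchange_gen q A a k m [] = 0" "exchange_gen q A a k m [x] = 0" "exchange_gen q A a k m (x # y # z # w) = 0"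
  by (simp_all add: exchange_gen_def)

definition shape_gens_bideg :: "complex \<Rightarrow> t3 \<Rightarrow> t3 \<Rightarrow> t3 \<Rightarrow> t2 \<Rightarrow> nat \<times> nat \<Rightarrow> ncpoly set" where
  "shape_gens_bideg q A a b c d =
     (if d = (2, 0) then range (\<lambda>k. quad_gen Vl Vl (a k))
      else if d = (0, 2) then range (\<lambda>m. quad_gen Wl Wl (b m))
      else if d = (1, 1) then insert (quad_gen Vl Wl c) {exchange_gen q A a k m | k m. True}
      else {})"

lemma gens_in_shape_gens_bideg:
  "quad_gen Vl Vl (a k) \<in> shape_gens_bideg q A a b c (2, 0)"
  "quad_gen Wl Wl (b m) \<in> shape_gens_bideg q A a b c (0, 2)"
  "quad_gen Vl Wl c \<in> shape_gens_bideg q A a b c (1, 1)"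
  "exchange_gen q A a k m \<in> shape_gens_bideg q A a b c (1, 1)"
  by (auto simp: shape_gens_bideg_def)

lemma UN_shape_gens_bideg: "(\<Union>d. shape_gens_bideg q A a b c d) = shape_gens q A a b c"
proof -
  have "(\<Union>d. shape_gens_bideg q A a b c d) = shape_gens_bideg q A a b c (2, 0)
      \<union> shape_gens_bideg q A a b c (0, 2) \<union> shape_gens_bideg q A a b c (1, 1)"
    by (auto simp: shape_gens_bideg_def split: if_splits)
  also have "\<dots> = shape_gens q A a b c"
    unfolding shape_gens_bideg_def shape_gens_def exchange_gen_def quad_gen_def by auto
  finally show ?thesis .
qed

lemma quad_gen_nonzero: "quad_gen L R e w \<noteq> 0 \<Longrightarrow> \<exists>i j. w = [L i, R j]"
  by (rule ccontr) (simp add: quad_gen_def)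

lemma homogeneous_quad_gen: "homogeneous (quad_gen L R e) 2"
  unfolding homogeneous_def by (auto dest: quad_gen_nonzero)

lemma bihomogeneous_gens:
  "bihomogeneous (quad_gen Vl Vl e) (2, 0)" "bihomogeneous (quad_gen Wl Wl e) (0, 2)"
  "bihomogeneous (quad_gen Vl Wl e) (1, 1)" "bihomogeneous (exchange_gen q A a k m) (1, 1)"
  unfolding bihomogeneous_def
  by (auto dest!: quad_gen_nonzero simp: exchange_gen_def word_bideg_def split: if_splits)

lemma letter_ranges [simp]: "Vl i \<in> range Vl" "Wl i \<in> range Wl" "Wl i \<notin> range Vl" "Vl i \<notin> range Wl"
  by auto

lemma homogeneous_exchange_gen: "homogeneous (exchange_gen q A a k m) 2"
  using bihomogeneous_imp_homogeneous[OF bihomogeneous_gens(4)] by (simp add: numeral_2_eq_2)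

lemma shape_gens_bideg_bihomogeneous:
  assumes "s \<in> shape_gens_bideg q A a b c d"
  shows "bihomogeneous s d \<and> fst d + snd d = 2"
proof -
  have "d = (2, 0) \<and> s \<in> range (\<lambda>k. quad_gen Vl Vl (a k))
      \<or> d = (0, 2) \<and> s \<in> range (\<lambda>m. quad_gen Wl Wl (b m))
      \<or> d = (1, 1) \<and> s \<in> insert (quad_gen Vl Wl c) {exchange_gen q A a k m | k m. True}"
    using assms unfolding shape_gens_bideg_def by (simp split: if_splits)
  then show ?thesis
    using bihomogeneous_gens by (elim disjE conjE) auto
qed

corollary cdim_shape_ideal:
  "k + l = 3 \<Longrightarrow>
    cdim (bideg_part (shape_ideal q A a b c) k l) = nc.dim (bideg_products (shape_gens_bideg q A a b c) (k, l))"
  unfolding shape_ideal_def UN_shape_gens_bideg[symmetric]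
  by (rule cdim_bideg_part_ideal_gen[OF shape_gens_bideg_bihomogeneous])

lemma bideg_products_30:
  "bideg_products (shape_gens_bideg q A a b c) (3, 0) =
     {ncmult (letter_poly (Vl i)) (quad_gen Vl Vl (a k)) | i k. True}
   \<union> {ncmult (quad_gen Vl Vl (a k)) (letter_poly (Vl j)) | k j. True}"
  (is "?P = ?T")
proof
  show "?P \<subseteq> ?T"
    by (auto elim!: bideg_productsE simp: shape_gens_bideg_def) blast+
  show "?T \<subseteq> ?P"
    by (auto intro!: bideg_productsI gens_in_shape_gens_bideg simp: plus_prod_def)
qed

lemma bideg_products_03:
  "bideg_products (shape_gens_bideg q A a b c) (0, 3) =
     {ncmult (letter_poly (Wl i)) (quad_gen Wl Wl (b m)) | i m. True}
   \<union> {ncmult (quad_gen Wl Wl (b m)) (letter_poly (Wl j)) | m j. True}"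
  (is "?P = ?T")
proof
  show "?P \<subseteq> ?T"
    by (auto elim!: bideg_productsE simp: shape_gens_bideg_def) blast+
  show "?T \<subseteq> ?P"
    by (auto intro!: bideg_productsI gens_in_shape_gens_bideg simp: plus_prod_def)
qed

lemma bideg_products_21:
  "bideg_products (shape_gens_bideg q A a b c) (2, 1) =
     {ncmult (exchange_gen q A a k m) (letter_poly (Vl j)) | k m j. True}
   \<union> {ncmult (letter_poly (Vl i)) (exchange_gen q A a k m) | i k m. True}
   \<union> {ncmult (quad_gen Vl Vl (a k)) (letter_poly (Wl j)) | k j. True}
   \<union> {ncmult (letter_poly (Vl i)) (quad_gen Vl Wl c) | i. True}
   \<union> {ncmult (letter_poly (Wl j)) (quad_gen Vl Vl (a k)) | j k. True}
   \<union> {ncmult (quad_gen Vl Wl c) (letter_poly (Vl j)) | j. True}"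
  (is "?P = ?T")
proof
  show "?P \<subseteq> ?T"
    by (auto elim!: bideg_productsE simp: shape_gens_bideg_def) blast+
  show "?T \<subseteq> ?P"
    by (auto intro!: bideg_productsI gens_in_shape_gens_bideg simp: plus_prod_def)
qed

lemma bideg_products_12:
  "bideg_products (shape_gens_bideg q A a b c) (1, 2) =
     {ncmult (exchange_gen q A a k m) (letter_poly (Wl j)) | k m j. True}
   \<union> {ncmult (letter_poly (Wl j)) (exchange_gen q A a k m) | j k m. True}
   \<union> {ncmult (letter_poly (Vl i)) (quad_gen Wl Wl (b m)) | i m. True}
   \<union> {ncmult (quad_gen Vl Wl c) (letter_poly (Wl j)) | j. True}
   \<union> {ncmult (quad_gen Wl Wl (b m)) (letter_poly (Vl j)) | m j. True}
   \<union> {ncmult (letter_poly (Wl j)) (quad_gen Vl Wl c) | j. True}"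
  (is "?P = ?T")
proof
  show "?P \<subseteq> ?T"
    by (auto elim!: bideg_productsE simp: shape_gens_bideg_def) blast+
  show "?T \<subseteq> ?P"
    by (auto intro!: bideg_productsI gens_in_shape_gens_bideg simp: plus_prod_def)
qed

section \<open>Dimension counts\<close>

lemma nc_dim_eq_card:
  fixes F :: "'i \<Rightarrow> ncpoly"
  assumes fin: "finite I"
    and indep: "\<And>c. (\<Sum>i\<in>I. ncscale (c i) (F i)) = 0 \<Longrightarrow> \<forall>i\<in>I. c i = 0"
    and "F ` I \<subseteq> X" "X \<subseteq> nc.span (F ` I)"
  shows "nc.dim X = card I"
proof -
  have inj: "inj_on F I"
  proof (rule inj_onI, rule ccontr)
    fix i j assume ij: "i \<in> I" "j \<in> I" "F i = F j" "i \<noteq> j"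
    define c where "c k = (if k = i then 1 else if k = j then -1 else (0::complex))" for k
    have "(\<Sum>k\<in>I. ncscale (c k) (F k)) = (\<Sum>k\<in>{i, j}. ncscale (c k) (F k))"
      by (rule sum.mono_neutral_right) (use fin ij in \<open>auto simp: c_def ncscale_def fun_eq_iff\<close>)
    also have "\<dots> = 0" using ij by (simp add: c_def ncscale_def fun_eq_iff)
    finally have "c i = 0" using indep ij by blast
    then show False by (simp add: c_def)
  qed
  have "nc.independent (F ` I)"
  proof (rule nc.independent_if_scalars_zero)
    show "finite (F ` I)" using fin by simp
  next
    fix f x assume s: "(\<Sum>x\<in>F ` I. ncscale (f x) x) = 0" and x: "x \<in> F ` I"
    have "(\<Sum>i\<in>I. ncscale (f (F i)) (F i)) = 0" using s by (simp add: sum.reindex[OF inj])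
    then have "\<forall>i\<in>I. f (F i) = 0" by (rule indep)
    then show "f x = 0" using x by auto
  qed
  moreover have "nc.span X = nc.span (F ` I)"
    unfolding nc.span_eq using assms(3,4) nc.span_superset by blast
  ultimately show ?thesis
    using nc.dim_eq_card_independent nc.span_eq_dim card_image[OF inj] by metis
qed

lemma nc_dim_eq_card_minus_one:
  fixes F :: "'i \<Rightarrow> ncpoly"
  assumes fin: "finite I" and j: "j \<in> I"
    and rel: "(\<Sum>i\<in>I. ncscale (c i) (F i)) = 0" and "c j \<noteq> 0"
    and indep: "\<And>d. (\<Sum>i\<in>I. ncscale (d i) (F i)) = 0 \<Longrightarrow> d j = 0 \<Longrightarrow> \<forall>i\<in>I. d i = 0"
  shows "nc.dim (F ` I) = card I - 1"
proof -
  have "nc.dim (F ` I) = card (I - {j})"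
  proof (rule nc_dim_eq_card)
    show "finite (I - {j})" using fin by simp
    show "\<forall>i\<in>I - {j}. d i = 0" if "(\<Sum>i\<in>I - {j}. ncscale (d i) (F i)) = 0" for d
    proof -
      define d' where "d' i = (if i = j then 0 else d i)" for i
      have "(\<Sum>i\<in>I. ncscale (d' i) (F i)) = (\<Sum>i\<in>I - {j}. ncscale (d i) (F i))"
        by (rule sum.mono_neutral_cong_right) (use fin in \<open>auto simp: d'_def ncscale_def fun_eq_iff\<close>)
      then have "\<forall>i\<in>I. d' i = 0"
        using that by (intro indep) (simp_all add: d'_def)
      then show ?thesis unfolding d'_def by (metis DiffD1 DiffD2 singletonI)
    qed
    show "F ` (I - {j}) \<subseteq> F ` I" by blast
    have "ncscale (c j) (F j) = - (\<Sum>i\<in>I - {j}. ncscale (c i) (F i))"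
      using rel sum.remove[OF fin j, of "\<lambda>i. ncscale (c i) (F i)"] by (simp add: eq_neg_iff_add_eq_0)
    moreover have "- (\<Sum>i\<in>I - {j}. ncscale (c i) (F i)) \<in> nc.span (F ` (I - {j}))"
      by (intro nc.span_neg nc.span_sum nc.span_scale nc.span_base) auto
    ultimately have "ncscale (c j) (F j) \<in> nc.span (F ` (I - {j}))"
      by simp
    then have "ncscale (inverse (c j)) (ncscale (c j) (F j)) \<in> nc.span (F ` (I - {j}))"
      by (rule nc.span_scale)
    then have "F j \<in> nc.span (F ` (I - {j}))"
      using \<open>c j \<noteq> 0\<close> by simp
    moreover have "F i \<in> nc.span (F ` (I - {j}))" if "i \<in> I - {j}" for i
      using that by (simp add: nc.span_base)
    ultimately show "F ` I \<subseteq> nc.span (F ` (I - {j}))"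
      by blast
  qed
  then show ?thesis
    using fin j by (simp add: card_Diff_singleton)
qed

lemma sum_UNIV_sum_type:
  "(\<Sum>i\<in>(UNIV :: ('a::finite + 'b::finite) set). g i) = (\<Sum>x\<in>UNIV. g (Inl x)) + (\<Sum>y\<in>UNIV. g (Inr y))"
  using sum.Plus[of "UNIV :: 'a set" "UNIV :: 'b set" g] by (simp add: comp_def)

lemma sum_UNIV_prod_type:
  "(\<Sum>p\<in>(UNIV :: ('a::finite \<times> 'b::finite) set). g p) = (\<Sum>x\<in>UNIV. \<Sum>y\<in>UNIV. g (x, y))"
  using sum.cartesian_product[of "\<lambda>x y. g (x, y)" "UNIV :: 'b set" "UNIV :: 'a set"] by simp

lemma nc_dim_four_families:
  fixes P Q :: "idx \<Rightarrow> idx \<Rightarrow> idx \<Rightarrow> ncpoly" and R :: "idx \<Rightarrow> idx \<Rightarrow> ncpoly" and U :: "idx \<Rightarrow> ncpoly"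
  defines "Span \<equiv> nc.span ({P k m j | k m j. True} \<union> {Q k m j | k m j. True} \<union> {R k j | k j. True}
      \<union> {U i | i. True})"
  assumes indep: "\<And>\<alpha> \<beta> \<gamma> \<delta>.
      (\<Sum>k\<in>UNIV. \<Sum>m\<in>UNIV. \<Sum>j\<in>UNIV. ncscale (\<alpha> k m j) (P k m j))
      + (\<Sum>k\<in>UNIV. \<Sum>m\<in>UNIV. \<Sum>j\<in>UNIV. ncscale (\<beta> k m j) (Q k m j))
      + (\<Sum>k\<in>UNIV. \<Sum>j\<in>UNIV. ncscale (\<gamma> k j) (R k j)) + (\<Sum>i\<in>UNIV. ncscale (\<delta> i) (U i)) = 0
      \<Longrightarrow> \<alpha> = (\<lambda>_ _ _. 0) \<and> \<beta> = (\<lambda>_ _ _. 0) \<and> \<gamma> = (\<lambda>_ _. 0) \<and> \<delta> = (\<lambda>_. 0)"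
    and "E1 \<subseteq> Span" "E2 \<subseteq> Span"
  shows "nc.dim ({P k m j | k m j. True} \<union> {Q k m j | k m j. True} \<union> {R k j | k j. True}
      \<union> {U i | i. True} \<union> E1 \<union> E2) = 66" (is "nc.dim ?T = _")
proof -
  define F :: "(idx \<times> idx \<times> idx) + (idx \<times> idx \<times> idx) + (idx \<times> idx) + idx \<Rightarrow> ncpoly"
    where "F = case_sum (\<lambda>(k, m, j). P k m j)
      (case_sum (\<lambda>(k, m, j). Q k m j) (case_sum (\<lambda>(k, j). R k j) U))"
  have F_range: "F ` UNIV = {P k m j | k m j. True} \<union> {Q k m j | k m j. True} \<union> {R k j | k j. True}
      \<union> {U i | i. True}"
    by (auto simp: F_def image_iff split: sum.splits) force+
  have indep_F: "\<forall>i\<in>UNIV. c i = 0" if "(\<Sum>i\<in>UNIV. ncscale (c i) (F i)) = 0" for c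
  proof -
    have "(\<lambda>k m j. c (Inl (k, m, j))) = (\<lambda>_ _ _. 0) \<and> (\<lambda>k m j. c (Inr (Inl (k, m, j)))) = (\<lambda>_ _ _. 0)
      \<and> (\<lambda>k j. c (Inr (Inr (Inl (k, j))))) = (\<lambda>_ _. 0) \<and> (\<lambda>i. c (Inr (Inr (Inr i)))) = (\<lambda>_. 0)"
      using that by (intro indep) (simp add: F_def sum_UNIV_sum_type sum_UNIV_prod_type add.assoc)
    then show ?thesis
      by (simp add: fun_eq_iff split_sum_all)
  qed
  have "F ` UNIV \<subseteq> ?T"
    by (auto simp: F_range)
  moreover have "?T \<subseteq> nc.span (F ` UNIV)"
    using assms(3,4) nc.span_superset[of "F ` UNIV"]
    unfolding Span_def F_range[symmetric] by (intro Un_least)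
  ultimately have "nc.dim ?T = card (UNIV :: ((idx \<times> idx \<times> idx) + (idx \<times> idx \<times> idx) + (idx \<times> idx) + idx) set)"
    by (intro nc_dim_eq_card indep_F) simp_all
  then show ?thesis by simp
qed

lemma overlap_relation_contract:
  fixes e f :: t3 and \<alpha> \<beta> :: t2
  assumes f_e: "\<And>k m. (\<Sum>x\<in>UNIV. \<Sum>y\<in>UNIV. e k x y * f x y m) = kdelta k m"
    and rel: "\<And>x y z. (\<Sum>k\<in>UNIV. \<alpha> k z * e k x y) + (\<Sum>k\<in>UNIV. \<beta> x k * e k y z) = 0"
  shows "\<alpha> m z = - (\<Sum>x\<in>UNIV. \<Sum>k\<in>UNIV. \<beta> x k * Hmap e f x k m z)"
    and "\<beta> x m = - (\<Sum>k\<in>UNIV. \<Sum>z\<in>UNIV. \<alpha> k z * Gmap e f k z x m)"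
proof -
  have "0 = (\<Sum>x\<in>UNIV. \<Sum>y\<in>UNIV. ((\<Sum>k\<in>UNIV. \<alpha> k z * e k x y) + (\<Sum>k\<in>UNIV. \<beta> x k * e k y z)) * f x y m)"
    by (simp add: rel)
  also have "\<dots> = (\<Sum>k\<in>UNIV. \<alpha> k z * (\<Sum>x\<in>UNIV. \<Sum>y\<in>UNIV. e k x y * f x y m))
      + (\<Sum>x\<in>UNIV. \<Sum>k\<in>UNIV. \<beta> x k * (\<Sum>y\<in>UNIV. f x y m * e k y z))"
    by (simp only: sum_idx) (simp add: algebra_simps)
  also have "\<dots> = \<alpha> m z + (\<Sum>x\<in>UNIV. \<Sum>k\<in>UNIV. \<beta> x k * Hmap e f x k m z)"
    by (simp add: f_e Hmap_def)
  finally show "\<alpha> m z = - (\<Sum>x\<in>UNIV. \<Sum>k\<in>UNIV. \<beta> x k * Hmap e f x k m z)"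
    by (simp add: eq_neg_iff_add_eq_0)
  have "0 = (\<Sum>y\<in>UNIV. \<Sum>z\<in>UNIV. ((\<Sum>k\<in>UNIV. \<alpha> k z * e k x y) + (\<Sum>k\<in>UNIV. \<beta> x k * e k y z)) * f y z m)"
    by (simp add: rel)
  also have "\<dots> = (\<Sum>k\<in>UNIV. \<Sum>z\<in>UNIV. \<alpha> k z * (\<Sum>y\<in>UNIV. e k x y * f y z m))
      + (\<Sum>k\<in>UNIV. \<beta> x k * (\<Sum>y\<in>UNIV. \<Sum>z\<in>UNIV. e k y z * f y z m))"
    by (simp only: sum_idx) (simp add: algebra_simps)
  also have "\<dots> = (\<Sum>k\<in>UNIV. \<Sum>z\<in>UNIV. \<alpha> k z * Gmap e f k z x m) + \<beta> x m"
    by (simp add: f_e Gmap_def)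
  finally show "\<beta> x m = - (\<Sum>k\<in>UNIV. \<Sum>z\<in>UNIV. \<alpha> k z * Gmap e f k z x m)"
    by (simp add: eq_neg_iff_add_eq_0 add.commute)
qed

text \<open>Substituting one contraction into the other and using G H = \<rho> (1 + Lc p) gives
  (1 - \<rho>) \<alpha> = \<rho> l p for a scalar l.\<close>

lemma overlap_relation_trivial:
  fixes e f :: t3 and Lc p \<alpha> \<beta> :: t2 and \<rho> :: complex
  assumes f_e: "\<And>k m. (\<Sum>x\<in>UNIV. \<Sum>y\<in>UNIV. e k x y * f x y m) = kdelta k m"
    and G_H: "\<And>k' z' m z. (\<Sum>x\<in>UNIV. \<Sum>k\<in>UNIV. Gmap e f k' z' x k * Hmap e f x k m z)
      = \<rho> * (kdelta k' m * kdelta z' z + Lc k' z' * p m z)"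
    and "\<rho> \<noteq> 1" and "p k0 j0 \<noteq> 0" and "\<alpha> k0 j0 = 0"
    and rel: "\<And>x y z. (\<Sum>k\<in>UNIV. \<alpha> k z * e k x y) + (\<Sum>k\<in>UNIV. \<beta> x k * e k y z) = 0"
  shows "\<alpha> = (\<lambda>_ _. 0) \<and> \<beta> = (\<lambda>_ _. 0)"
proof -
  note contract = overlap_relation_contract[OF f_e rel]
  define l where "l = (\<Sum>k'\<in>UNIV. \<Sum>z'\<in>UNIV. \<alpha> k' z' * Lc k' z')"
  have scaled: "(1 - \<rho>) * \<alpha> m z = \<rho> * l * p m z" for m z
  proof -
    have "\<alpha> m z = (\<Sum>k'\<in>UNIV. \<Sum>z'\<in>UNIV. \<alpha> k' z'
        * (\<Sum>x\<in>UNIV. \<Sum>k\<in>UNIV. Gmap e f k' z' x k * Hmap e f x k m z))"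
      unfolding contract(1)[of m z] contract(2) by (simp only: sum_idx) (simp add: algebra_simps)
    also have "\<dots> = \<rho> * ((\<Sum>k'\<in>UNIV. \<Sum>z'\<in>UNIV. \<alpha> k' z' * kdelta k' m * kdelta z' z) + p m z * l)"
      unfolding G_H l_def by (simp only: sum_idx) (simp add: algebra_simps)
    also have "(\<Sum>k'\<in>UNIV. \<Sum>z'\<in>UNIV. \<alpha> k' z' * kdelta k' m * kdelta z' z) = \<alpha> m z"
      by (simp add: sum_distrib_right[symmetric])
    finally show ?thesis
      by (simp add: algebra_simps)
  qed
  from scaled[of k0 j0] have "\<rho> * l = 0"
    using \<open>p k0 j0 \<noteq> 0\<close> \<open>\<alpha> k0 j0 = 0\<close> by simp
  then have "(1 - \<rho>) * \<alpha> m z = 0" for m z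
    using scaled[of m z] by (metis mult_zero_left)
  then have "\<alpha> m z = 0" for m z
    using \<open>\<rho> \<noteq> 1\<close> by simp
  moreover from this have "\<beta> x m = 0" for x m
    by (simp add: contract(2))
  ultimately show ?thesis by (simp add: fun_eq_iff)
qed

lemma overlap_products_apply:
  assumes L: "inj L"
  shows "ncmult (quad_gen L L (e k)) (letter_poly (L j)) [L x, L y, L z] = (if z = j then e k x y else 0)"
    and "ncmult (letter_poly (L i)) (quad_gen L L (e k)) [L x, L y, L z] = (if x = i then e k y z else 0)"
    and "\<forall>x y z. w \<noteq> [L x, L y, L z] \<Longrightarrow>
      ncmult (quad_gen L L (e k)) (letter_poly (L j)) w = 0 \<and> ncmult (letter_poly (L i)) (quad_gen L L (e k)) w = 0"
proof -
  show "ncmult (quad_gen L L (e k)) (letter_poly (L j)) [L x, L y, L z] = (if z = j then e k x y else 0)"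
    "ncmult (letter_poly (L i)) (quad_gen L L (e k)) [L x, L y, L z] = (if x = i then e k y z else 0)"
    using L by (simp_all add: ncmult_length3 quad_gen_length2 inj_eq)
  assume w: "\<forall>x y z. w \<noteq> [L x, L y, L z]"
  show "ncmult (quad_gen L L (e k)) (letter_poly (L j)) w = 0 \<and> ncmult (letter_poly (L i)) (quad_gen L L (e k)) w = 0"
  proof (cases "length w = 3")
    case True
    then obtain l1 l2 l3 where w3: "w = [l1, l2, l3]" by (auto simp: length_eq_3_iff)
    with w have "l1 \<notin> range L \<or> l2 \<notin> range L \<or> l3 \<notin> range L" by blast
    then show ?thesis
      using L by (auto simp: w3 ncmult_length3 quad_gen_length2)
  next
    case False
    have "homogeneous (ncmult (quad_gen L L (e k)) (letter_poly (L j))) 3"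
      "homogeneous (ncmult (letter_poly (L i)) (quad_gen L L (e k))) 3"
      by (simp_all add: homogeneous_letter_products homogeneous_quad_gen)
    with False show ?thesis by (simp add: homogeneous_eq_zero)
  qed
qed

lemma dim_overlap_products:
  fixes L :: "idx \<Rightarrow> letter" and e f :: t3 and Lc p r :: t2 and \<rho> :: complex
  assumes L: "inj L"
    and f_e: "\<And>k m. (\<Sum>x\<in>UNIV. \<Sum>y\<in>UNIV. e k x y * f x y m) = kdelta k m"
    and G_H: "\<And>k' z' m z. (\<Sum>x\<in>UNIV. \<Sum>k\<in>UNIV. Gmap e f k' z' x k * Hmap e f x k m z)
      = \<rho> * (kdelta k' m * kdelta z' z + Lc k' z' * p m z)"
    and "\<rho> \<noteq> 1"
    and rel: "\<And>x y z. (\<Sum>k\<in>UNIV. p k z * e k x y) = (\<Sum>k\<in>UNIV. r x k * e k y z)"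
    and p0: "p k0 j0 \<noteq> 0"
  shows "nc.dim ({ncmult (letter_poly (L i)) (quad_gen L L (e k)) | i k. True}
      \<union> {ncmult (quad_gen L L (e k)) (letter_poly (L j)) | k j. True}) = 17"
proof -
  define F :: "(idx \<times> idx) + (idx \<times> idx) \<Rightarrow> ncpoly" where
    "F = case_sum (\<lambda>(k, j). ncmult (quad_gen L L (e k)) (letter_poly (L j)))
      (\<lambda>(i, k). ncmult (letter_poly (L i)) (quad_gen L L (e k)))"
  note F_apply = overlap_products_apply[OF L]
  have combination_apply: "(\<Sum>i\<in>UNIV. ncscale (c i) (F i)) [L x, L y, L z]
      = (\<Sum>k\<in>UNIV. c (Inl (k, z)) * e k x y) + (\<Sum>k\<in>UNIV. c (Inr (x, k)) * e k y z)" for c x y z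
    by (simp add: F_def sum_fun_apply sum_UNIV_sum_type sum_UNIV_prod_type ncscale_apply
        F_apply if_zero_simps)
  define c where "c = case_sum (\<lambda>(k, j). p k j) (\<lambda>(i, k). - r i k)"
  have rel_F: "(\<Sum>i\<in>UNIV. ncscale (c i) (F i)) = 0"
  proof
    fix w :: "letter list"
    show "(\<Sum>i\<in>UNIV. ncscale (c i) (F i)) w = 0 w"
    proof (cases "\<exists>x y z. w = [L x, L y, L z]")
      case True
      then show ?thesis
        using combination_apply rel by (auto simp: c_def sum_negf)
    next
      case False
      then have w: "\<forall>x y z. w \<noteq> [L x, L y, L z]" by blast
      have "F i w = 0" for i
        using F_apply(3)[OF w, of e] by (auto simp: F_def split: sum.split)
      then show ?thesis by (simp add: sum_fun_apply ncscale_apply)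
    qed
  qed
  have indep_F: "\<forall>i\<in>UNIV. d i = 0"
    if "(\<Sum>i\<in>UNIV. ncscale (d i) (F i)) = 0" "d (Inl (k0, j0)) = 0" for d
  proof -
    have "(\<Sum>k\<in>UNIV. d (Inl (k, z)) * e k x y) + (\<Sum>k\<in>UNIV. d (Inr (x, k)) * e k y z) = 0" for x y z
      using that(1) combination_apply[of d x y z] by simp
    then have "(\<lambda>k j. d (Inl (k, j))) = (\<lambda>_ _. 0) \<and> (\<lambda>i k. d (Inr (i, k))) = (\<lambda>_ _. 0)"
      by (intro overlap_relation_trivial[OF f_e G_H \<open>\<rho> \<noteq> 1\<close> p0]) (simp_all add: that(2))
    then show ?thesis
      by (simp add: fun_eq_iff split_sum_all)
  qed
  have "nc.dim (F ` UNIV) = CARD((idx \<times> idx) + (idx \<times> idx)) - 1"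
    by (rule nc_dim_eq_card_minus_one[where j = "Inl (k0, j0)", OF _ _ rel_F _ indep_F])
      (simp_all add: c_def p0)
  moreover have "F ` UNIV = {ncmult (letter_poly (L i)) (quad_gen L L (e k)) | i k. True}
      \<union> {ncmult (quad_gen L L (e k)) (letter_poly (L j)) | k j. True}"
    by (auto simp: F_def image_iff split: sum.splits) force+
  ultimately show ?thesis by simp
qed

context bqd
begin

lemma c_nonzero: "\<exists>k j. c k j \<noteq> 0"
proof (rule ccontr)
  assume "\<not> ?thesis"
  then show False using D_c_trace kappa_nonzero by simp
qed

lemma d_nonzero: "\<exists>k j. d k j \<noteq> 0"
proof (rule ccontr)
  assume "\<not> ?thesis"
  then show False using C_d_trace kappa_nonzero by simp
qed

lemma cdim_30: "cdim (bideg_part (shape_ideal q A a b c) 3 0) = 17"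
proof -
  obtain k0 j0 where "d k0 j0 \<noteq> 0" using d_nonzero by blast
  have "(\<Sum>k\<in>UNIV. d k z * a k x y) = (\<Sum>k\<in>UNIV. (inverse \<omega> * c x k) * a k y z)" for x y z
    by (simp add: d_a_eq_c_a sum_distrib_left mult.assoc)
  then have "nc.dim (bideg_products (shape_gens_bideg q A a b c) (3, 0)) = 17"
    unfolding bideg_products_30
    by (intro dim_overlap_products[OF inj_letters(1) A_a_inverse G_H_eq rho_ne_one _ \<open>d k0 j0 \<noteq> 0\<close>])
  then show ?thesis
    using cdim_shape_ideal[of 3 0] by simp
qed

lemma cdim_03: "cdim (bideg_part (shape_ideal q A a b c) 0 3) = 17"
proof -
  obtain k0 j0 where "c k0 j0 \<noteq> 0" using c_nonzero by blast
  have "(\<Sum>k\<in>UNIV. c k z * b k x y) = (\<Sum>k\<in>UNIV. (\<omega>^2 * d x k) * b k y z)" for x y z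
    by (simp add: c_b_eq_d_b sum_distrib_left mult.assoc)
  then have "nc.dim (bideg_products (shape_gens_bideg q A a b c) (0, 3)) = 17"
    unfolding bideg_products_03
    by (intro dim_overlap_products[where e = b and f = B and Lc = D and p = c,
          OF inj_letters(2) b_B_inverse G_H_eq_for_b_B rho_ne_one _ \<open>c k0 j0 \<noteq> 0\<close>])
  then show ?thesis
    using cdim_shape_ideal[of 0 3] by simp
qed

text \<open>The products c(1) v_j and w_j a(w_k) of bidegree (2,1), and dually w_j c(1) and
  b(v_m) v_j of bidegree (1,2), are combinations of the other products: the coefficients come from
  the contraction identities for G and, for w_j a(w_k) and b(v_m) v_j, from \<rho> \<tau>^2 = 1.\<close>

lemma c_times_V_eq:
  "ncmult (quad_gen Vl Wl c) (letter_poly (Vl j)) =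
     (\<Sum>x\<in>UNIV. \<Sum>y\<in>UNIV. ncscale (c x y) (ncmult (letter_poly (Vl x)) (exchange_gen q A a y j)))
     + (\<Sum>k\<in>UNIV. \<Sum>l\<in>UNIV. ncscale (- (\<tau> * inverse \<omega>) * b j k l)
          (ncmult (quad_gen Vl Vl (a k)) (letter_poly (Wl l))))" (is "?L = ?R")
proof (rule homogeneous_eq_3I)
  have key: "(\<Sum>y\<in>UNIV. c x y * (\<tau> * G y j i l)) + (\<Sum>k\<in>UNIV. - (\<tau> * inverse \<omega> * b j k l * a k x i)) = 0"
    for x i l
  proof -
    have "(\<Sum>y\<in>UNIV. c x y * (\<tau> * G y j i l)) = \<tau> * (\<Sum>y\<in>UNIV. c x y * G y j i l)"
      by (simp add: sum_distrib_left mult_ac)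
    also have "\<dots> = \<tau> * inverse \<omega> * (\<Sum>k\<in>UNIV. b j k l * a k x i)"
      by (simp add: c_G_eq_b_a mult.assoc)
    finally show ?thesis
      by (simp add: sum_distrib_left sum_negf mult_ac)
  qed
  fix l1 l2 l3
  show "?L [l1, l2, l3] = ?R [l1, l2, l3]"
    using key by (cases l1; cases l2; cases l3)
      (simp_all add: sum_fun_apply ncscale_apply ncmult_length3 quad_gen_length2 if_zero_simps
        \<tau>_def[symmetric])
qed (intro homogeneous_add homogeneous_sum homogeneous_ncscale homogeneous_letter_products
      homogeneous_quad_gen homogeneous_exchange_gen)+

lemma W_times_a_eq:
  "ncmult (letter_poly (Wl j)) (quad_gen Vl Vl (a k)) =
     (\<Sum>x\<in>UNIV. \<Sum>y\<in>UNIV. ncscale (a k x y) (ncmult (exchange_gen q A a j x) (letter_poly (Vl y))))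
     + (\<Sum>i\<in>UNIV. \<Sum>l\<in>UNIV. \<Sum>y\<in>UNIV. ncscale (- (\<tau> * (\<Sum>x\<in>UNIV. a k x y * G j x i l)))
          (ncmult (letter_poly (Vl i)) (exchange_gen q A a l y)))
     + ncmult (quad_gen Vl Vl (a j)) (letter_poly (Wl k))
     + (\<Sum>i\<in>UNIV. ncscale (B j k i) (ncmult (letter_poly (Vl i)) (quad_gen Vl Wl c)))"
  (is "?L = ?R")
proof (rule homogeneous_eq_3I)
  have key: "(\<Sum>l\<in>UNIV. \<Sum>y\<in>UNIV. - (\<tau> * (\<Sum>x\<in>UNIV. a k x y * G j x i l) * (\<tau> * G l y i' l')))
      = - (a j i i' * kdelta k l' + B j k i * c i' l')" for i i' l'
  proof -
    have "(\<Sum>l\<in>UNIV. \<Sum>y\<in>UNIV. - (\<tau> * (\<Sum>x\<in>UNIV. a k x y * G j x i l) * (\<tau> * G l y i' l')))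
        = - (\<tau>^2) * (\<Sum>x\<in>UNIV. \<Sum>y\<in>UNIV. \<Sum>l\<in>UNIV. a k x y * G j x i l * G l y i' l')"
      by (simp only: sum_idx) (simp add: algebra_simps power2_eq_square)
    also have "\<dots> = - (\<rho> * \<tau>^2) * (a j i i' * kdelta k l' + B j k i * c i' l')"
      by (simp add: a_G_G_eq)
    finally show ?thesis
      using rho_mult_tau_sq by simp
  qed
  have sum_scaled: "(\<Sum>x\<in>UNIV. f x * (t * g x)) = t * (\<Sum>x\<in>UNIV. f x * g x)" for f g :: "idx \<Rightarrow> complex" and t
    by (simp add: sum_distrib_left mult_ac)
  fix l1 l2 l3
  show "?L [l1, l2, l3] = ?R [l1, l2, l3]"
    using key by (cases l1; cases l2; cases l3)
      (simp_all add: sum_fun_apply ncscale_apply ncmult_length3 quad_gen_length2 if_zero_simps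
        \<tau>_def[symmetric] sum_scaled kdelta_def)
qed (intro homogeneous_add homogeneous_sum homogeneous_ncscale homogeneous_letter_products
      homogeneous_quad_gen homogeneous_exchange_gen)+

lemma independent_products_21:
  assumes "(\<Sum>k\<in>UNIV. \<Sum>m\<in>UNIV. \<Sum>j\<in>UNIV. ncscale (\<alpha> k m j) (ncmult (exchange_gen q A a k m) (letter_poly (Vl j))))
    + (\<Sum>i\<in>UNIV. \<Sum>k\<in>UNIV. \<Sum>m\<in>UNIV. ncscale (\<beta> i k m) (ncmult (letter_poly (Vl i)) (exchange_gen q A a k m)))
    + (\<Sum>k\<in>UNIV. \<Sum>j\<in>UNIV. ncscale (\<gamma> k j) (ncmult (quad_gen Vl Vl (a k)) (letter_poly (Wl j))))
    + (\<Sum>i\<in>UNIV. ncscale (\<delta> i) (ncmult (letter_poly (Vl i)) (quad_gen Vl Wl c))) = 0"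
    (is "?Z = 0")
  shows "\<alpha> = (\<lambda>_ _ _. 0) \<and> \<beta> = (\<lambda>_ _ _. 0) \<and> \<gamma> = (\<lambda>_ _. 0) \<and> \<delta> = (\<lambda>_. 0)"
proof -
  have Z: "?Z w = 0" for w
    using assms by simp
  note eval = sum_fun_apply ncscale_apply ncmult_length3 quad_gen_length2 if_zero_simps
  have \<alpha>: "\<alpha> k m j = 0" for k m j
    using Z[of "[Wl k, Vl m, Vl j]"] by (simp add: eval)
  have \<beta>: "\<beta> i k m = 0" for i k m
    using Z[of "[Vl i, Wl k, Vl m]"] by (simp add: eval \<alpha>)
  have "(\<Sum>k\<in>UNIV. \<gamma> k z * a k x y) + \<delta> x * c y z = 0" for x y z
    using Z[of "[Vl x, Vl y, Wl z]"] by (simp add: eval \<beta>)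
  then have "\<gamma> = (\<lambda>_ _. 0) \<and> \<delta> = (\<lambda>_. 0)"
    by (rule independent_a_W_and_V_c)
  with \<alpha> \<beta> show ?thesis by (simp add: fun_eq_iff)
qed

lemma cdim_21: "cdim (bideg_part (shape_ideal q A a b c) 2 1) = 66"
proof -
  define S where "S = {ncmult (exchange_gen q A a k m) (letter_poly (Vl j)) | k m j. True}
    \<union> {ncmult (letter_poly (Vl i)) (exchange_gen q A a k m) | i k m. True}
    \<union> {ncmult (quad_gen Vl Vl (a k)) (letter_poly (Wl j)) | k j. True}
    \<union> {ncmult (letter_poly (Vl i)) (quad_gen Vl Wl c) | i. True}"
  have in_S: "ncmult (exchange_gen q A a k m) (letter_poly (Vl j)) \<in> nc.span S"
    "ncmult (letter_poly (Vl i)) (exchange_gen q A a k m) \<in> nc.span S"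
    "ncmult (quad_gen Vl Vl (a k)) (letter_poly (Wl j)) \<in> nc.span S"
    "ncmult (letter_poly (Vl i)) (quad_gen Vl Wl c) \<in> nc.span S" for i j k m
    unfolding S_def by (rule nc.span_base, blast)+
  have "ncmult (letter_poly (Wl j)) (quad_gen Vl Vl (a k)) \<in> nc.span S" for j k
    unfolding W_times_a_eq by (intro nc.span_add nc.span_sum nc.span_scale in_S)
  moreover have "ncmult (quad_gen Vl Wl c) (letter_poly (Vl j)) \<in> nc.span S" for j
    unfolding c_times_V_eq by (intro nc.span_add nc.span_sum nc.span_scale in_S)
  ultimately have "nc.dim (bideg_products (shape_gens_bideg q A a b c) (2, 1)) = 66"
    unfolding bideg_products_21
    by (intro nc_dim_four_families independent_products_21) (auto simp: S_def)
  then show ?thesis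
    using cdim_shape_ideal[of 2 1] by simp
qed

lemma W_times_c_eq:
  "ncmult (letter_poly (Wl j)) (quad_gen Vl Wl c) =
     (\<Sum>x\<in>UNIV. \<Sum>y\<in>UNIV. ncscale (c x y) (ncmult (exchange_gen q A a j x) (letter_poly (Wl y))))
     + (\<Sum>i\<in>UNIV. \<Sum>t\<in>UNIV. ncscale (- (\<tau> * a j i t)) (ncmult (letter_poly (Vl i)) (quad_gen Wl Wl (b t))))"
  (is "?L = ?R")
proof (rule homogeneous_eq_3I)
  have key: "(\<Sum>i\<in>UNIV. c i y * (\<tau> * G j i x l)) + (\<Sum>i\<in>UNIV. - (\<tau> * a j x i * b i l y)) = 0" for x y l
  proof -
    have "(\<Sum>i\<in>UNIV. c i y * (\<tau> * G j i x l)) = \<tau> * (\<Sum>i\<in>UNIV. c i y * G j i x l)"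
      by (simp add: sum_distrib_left mult_ac)
    also have "\<dots> = \<tau> * (\<Sum>i\<in>UNIV. a j x i * b i l y)"
      by (simp add: c_G_eq_a_b)
    finally show ?thesis
      by (simp add: sum_distrib_left sum_negf mult_ac)
  qed
  fix l1 l2 l3
  show "?L [l1, l2, l3] = ?R [l1, l2, l3]"
    using key by (cases l1; cases l2; cases l3)
      (simp_all add: sum_fun_apply ncscale_apply ncmult_length3 quad_gen_length2 if_zero_simps
        \<tau>_def[symmetric])
qed (intro homogeneous_add homogeneous_sum homogeneous_ncscale homogeneous_letter_products
      homogeneous_quad_gen homogeneous_exchange_gen)+

lemma b_times_V_eq:
  "ncmult (quad_gen Wl Wl (b m)) (letter_poly (Vl j)) =
     (\<Sum>x\<in>UNIV. \<Sum>y\<in>UNIV. ncscale (b m x y) (ncmult (letter_poly (Wl x)) (exchange_gen q A a y j)))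
     + (\<Sum>x\<in>UNIV. \<Sum>i\<in>UNIV. \<Sum>l\<in>UNIV. ncscale (- (\<tau> * (\<Sum>y\<in>UNIV. b m x y * G y j i l)))
          (ncmult (exchange_gen q A a x i) (letter_poly (Wl l))))
     + ncscale (inverse \<omega>) (ncmult (letter_poly (Vl m)) (quad_gen Wl Wl (b j)))
     + (\<Sum>l\<in>UNIV. ncscale (inverse \<omega> * (\<Sum>t\<in>UNIV. D m t * b j t l))
          (ncmult (quad_gen Vl Wl c) (letter_poly (Wl l))))"
  (is "?L = ?R")
proof (rule homogeneous_eq_3I)
  have key: "(\<Sum>i\<in>UNIV. \<Sum>i'\<in>UNIV. - (\<tau> * (\<Sum>y\<in>UNIV. b m i y * G y j i' l) * (\<tau> * G i i' x l')))
     = - (inverse \<omega> * (kdelta x m * b j l' l + c x l' * (\<Sum>t\<in>UNIV. D m t * b j t l)))" for x l l'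
  proof -
    have "(\<Sum>i\<in>UNIV. \<Sum>i'\<in>UNIV. - (\<tau> * (\<Sum>y\<in>UNIV. b m i y * G y j i' l) * (\<tau> * G i i' x l')))
        = - (\<tau>^2) * (\<Sum>x'\<in>UNIV. \<Sum>i\<in>UNIV. \<Sum>y\<in>UNIV. b m x' y * G y j i l * G x' i x l')"
      by (simp only: sum_idx) (simp add: algebra_simps power2_eq_square)
    also have "\<dots> = - (\<rho> * \<tau>^2) * (inverse \<omega> * (kdelta x m * b j l' l + c x l' * (\<Sum>t\<in>UNIV. D m t * b j t l)))"
      by (simp add: b_G_G_eq)
    finally show ?thesis
      using rho_mult_tau_sq by simp
  qed
  have sum_scaled: "(\<Sum>x\<in>UNIV. f x * (t * g x)) = t * (\<Sum>x\<in>UNIV. f x * g x)" for f g :: "idx \<Rightarrow> complex" and t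
    by (simp add: sum_distrib_left mult_ac)
  fix l1 l2 l3
  show "?L [l1, l2, l3] = ?R [l1, l2, l3]"
    by (cases l1; cases l2; cases l3; simp add: sum_fun_apply ncscale_apply ncmult_length3
        quad_gen_length2 if_zero_simps \<tau>_def[symmetric] sum_scaled key)
      (auto simp: kdelta_def algebra_simps)
qed (intro homogeneous_add homogeneous_sum homogeneous_ncscale homogeneous_letter_products
      homogeneous_quad_gen homogeneous_exchange_gen)+

lemma independent_products_12:
  assumes "(\<Sum>k\<in>UNIV. \<Sum>m\<in>UNIV. \<Sum>j\<in>UNIV. ncscale (\<alpha> k m j) (ncmult (exchange_gen q A a k m) (letter_poly (Wl j))))
    + (\<Sum>j\<in>UNIV. \<Sum>k\<in>UNIV. \<Sum>m\<in>UNIV. ncscale (\<beta> j k m) (ncmult (letter_poly (Wl j)) (exchange_gen q A a k m)))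
    + (\<Sum>i\<in>UNIV. \<Sum>m\<in>UNIV. ncscale (\<gamma> i m) (ncmult (letter_poly (Vl i)) (quad_gen Wl Wl (b m))))
    + (\<Sum>j\<in>UNIV. ncscale (\<delta> j) (ncmult (quad_gen Vl Wl c) (letter_poly (Wl j)))) = 0"
    (is "?Z = 0")
  shows "\<alpha> = (\<lambda>_ _ _. 0) \<and> \<beta> = (\<lambda>_ _ _. 0) \<and> \<gamma> = (\<lambda>_ _. 0) \<and> \<delta> = (\<lambda>_. 0)"
proof -
  have Z: "?Z w = 0" for w
    using assms by simp
  note eval = sum_fun_apply ncscale_apply ncmult_length3 quad_gen_length2 if_zero_simps
  have \<beta>: "\<beta> j k m = 0" for j k m
    using Z[of "[Wl j, Wl k, Vl m]"] by (simp add: eval)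
  have \<alpha>: "\<alpha> k m j = 0" for k m j
    using Z[of "[Wl k, Vl m, Wl j]"] by (simp add: eval \<beta>)
  have "(\<Sum>m\<in>UNIV. \<gamma> i m * b m y z) + \<delta> z * c i y = 0" for i y z
    using Z[of "[Vl i, Wl y, Wl z]"] by (simp add: eval \<alpha>)
  then have "\<gamma> = (\<lambda>_ _. 0) \<and> \<delta> = (\<lambda>_. 0)"
    by (rule independent_V_b_and_c_W)
  with \<alpha> \<beta> show ?thesis by (simp add: fun_eq_iff)
qed

lemma cdim_12: "cdim (bideg_part (shape_ideal q A a b c) 1 2) = 66"
proof -
  define S where "S = {ncmult (exchange_gen q A a k m) (letter_poly (Wl j)) | k m j. True}
    \<union> {ncmult (letter_poly (Wl j)) (exchange_gen q A a k m) | j k m. True}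
    \<union> {ncmult (letter_poly (Vl i)) (quad_gen Wl Wl (b m)) | i m. True}
    \<union> {ncmult (quad_gen Vl Wl c) (letter_poly (Wl j)) | j. True}"
  have in_S: "ncmult (exchange_gen q A a k m) (letter_poly (Wl j)) \<in> nc.span S"
    "ncmult (letter_poly (Wl j)) (exchange_gen q A a k m) \<in> nc.span S"
    "ncmult (letter_poly (Vl i)) (quad_gen Wl Wl (b m)) \<in> nc.span S"
    "ncmult (quad_gen Vl Wl c) (letter_poly (Wl j)) \<in> nc.span S" for i j k m
    unfolding S_def by (rule nc.span_base, blast)+
  have "ncmult (quad_gen Wl Wl (b m)) (letter_poly (Vl j)) \<in> nc.span S" for m j
    unfolding b_times_V_eq by (intro nc.span_add nc.span_sum nc.span_scale in_S)
  moreover have "ncmult (letter_poly (Wl j)) (quad_gen Vl Wl c) \<in> nc.span S" for j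
    unfolding W_times_c_eq by (intro nc.span_add nc.span_sum nc.span_scale in_S)
  ultimately have "nc.dim (bideg_products (shape_gens_bideg q A a b c) (1, 2)) = 66"
    unfolding bideg_products_12
    by (intro nc_dim_four_families independent_products_12) (auto simp: S_def)
  then show ?thesis
    using cdim_shape_ideal[of 1 2] by simp
qed

end

theorem lemma5p2:
  fixes q \<omega> :: complex and A a B b :: t3 and C c D d :: t2
  assumes "BQD q \<omega> A a B b C c D d"
  shows "cdim (bideg_part (shape_ideal q A a b c) 3 0) = 17
       \<and> cdim (bideg_part (shape_ideal q A a b c) 0 3) = 17
       \<and> cdim (bideg_part (shape_ideal q A a b c) 2 1) = 66
       \<and> cdim (bideg_part (shape_ideal q A a b c) 1 2) = 66"
proof -
  interpret bqd q \<omega> A a B b C c D d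
    using assms by unfold_locales
  show ?thesis
    using cdim_30 cdim_03 cdim_21 cdim_12 by simp
qed

end
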